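(* The holomorphic sectional curvature of $({\rm M}_1,\gamma)$ is unbounded above.
   Context: ${\rm M}_1$ is the space of degree one rational maps $W(z)=\frac{az+b}{cz+d}$, $ad-bc\neq0$, of the Riemann sphere, with complex structure $J$ induced by the open inclusion ${\rm M}_1\subset\mathbb{C}P^3$, $W\mapsto[a:b:c:d]$. $\gamma$ is the $L^2$ metric: for a tangent vector represented by a variation $\dot W$, $\gamma(\dot W,\dot W)=\int_{\mathbb{C}}\frac{2\,dx\,dy}{(1+|z|^2)^2}\frac{|\dot W|^2}{(1+|W|^2)^2}$ ($z=x+iy$; stereographic coordinates on both spheres); $\gamma$ is K\"ahler with respect to $J$. The holomorphic sectional curvature of a unit vector $X$ is ${\rm Hol}(X)=\langle R(X,JX)JX,X\rangle$, $R$ the Riemann curvature tensor of $\gamma$. *)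

theory Defs
  imports "HOL-Analysis.Analysis"
begin

type_synonym coeffs4 = "complex \<times> complex \<times> complex \<times> complex"

definition Wmap :: "coeffs4 \<Rightarrow> complex \<Rightarrow> complex" where
  "Wmap p z = (case p of (a,b,c,d) \<Rightarrow> (a*z + b) / (c*z + d))"

text \<open>Variation of W when the coefficients move in direction q = (a',b',c',d').\<close>
definition Wdot :: "coeffs4 \<Rightarrow> coeffs4 \<Rightarrow> complex \<Rightarrow> complex" where
  "Wdot p q z = (case p of (a,b,c,d) \<Rightarrow> case q of (a',b',c',d') \<Rightarrow>
      ((a'*z + b')*(c*z + d) - (a*z + b)*(c'*z + d')) / (c*z + d)^2)"

text \<open>The four standard affine charts of CP^3 (slot k normalised to 1); complex^3 carries
  the induced complex structure, J = multiplication by i.\<close>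
definition chart :: "nat \<Rightarrow> complex^3 \<Rightarrow> coeffs4" where
  "chart k x = (if k = 0 then (1, x$0, x$1, x$2)
      else if k = 1 then (x$0, 1, x$1, x$2)
      else if k = 2 then (x$0, x$1, 1, x$2)
      else (x$0, x$1, x$2, 1))"

definition chart_var :: "nat \<Rightarrow> complex^3 \<Rightarrow> coeffs4" where
  "chart_var k u = (if k = 0 then (0, u$0, u$1, u$2)
      else if k = 1 then (u$0, 0, u$1, u$2)
      else if k = 2 then (u$0, u$1, 0, u$2)
      else (u$0, u$1, u$2, 0))"

definition in_M1 :: "coeffs4 \<Rightarrow> bool" where
  "in_M1 p = (case p of (a,b,c,d) \<Rightarrow> a*d - b*c \<noteq> 0)"

definition chart_dom :: "nat \<Rightarrow> (complex^3) set" where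
  "chart_dom k = {x. in_M1 (chart k x)}"

definition Jc :: "complex^3 \<Rightarrow> complex^3" where
  "Jc u = \<i> *s u"

text \<open>L2 quadratic form gamma(Wdot,Wdot), integral over C with Lebesgue measure dx dy.\<close>
definition L2Q :: "nat \<Rightarrow> complex^3 \<Rightarrow> complex^3 \<Rightarrow> real" where
  "L2Q k x u = (LINT z|lborel.
      2 / (1 + (cmod z)^2)^2 * (cmod (Wdot (chart k x) (chart_var k u) z))^2
        / (1 + (cmod (Wmap (chart k x) z))^2)^2)"

definition gam :: "nat \<Rightarrow> complex^3 \<Rightarrow> complex^3 \<Rightarrow> complex^3 \<Rightarrow> real" where
  "gam k x u v = (L2Q k x (u + v) - L2Q k x (u - v)) / 4"

definition dd :: "(complex^3 \<Rightarrow> real) \<Rightarrow> complex^3 \<Rightarrow> complex^3 \<Rightarrow> real" where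
  "dd f x X = deriv (\<lambda>t. f (x + t *\<^sub>R X)) 0"

definition ddv :: "(complex^3 \<Rightarrow> complex^3) \<Rightarrow> complex^3 \<Rightarrow> complex^3 \<Rightarrow> complex^3" where
  "ddv F x X = vector_derivative (\<lambda>t. F (x + t *\<^sub>R X)) (at 0)"

text \<open>Levi-Civita connection on constant coordinate fields (Koszul formula):
  gam(nabla_X Y, Z) = (X gam(Y,Z) + Y gam(X,Z) - Z gam(X,Y))/2.\<close>
definition Chr :: "nat \<Rightarrow> complex^3 \<Rightarrow> complex^3 \<Rightarrow> complex^3 \<Rightarrow> complex^3" where
  "Chr k x X Y = (THE v. \<forall>Z. gam k x v Z =
      (dd (\<lambda>y. gam k y Y Z) x X + dd (\<lambda>y. gam k y X Z) x Y - dd (\<lambda>y. gam k y X Y) x Z) / 2)"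

text \<open>Riemann tensor R(X,Y)Z = nabla_X nabla_Y Z - nabla_Y nabla_X Z - nabla_[X,Y] Z
  for constant coordinate fields X Y Z (so [X,Y] = 0).\<close>
definition Riem :: "nat \<Rightarrow> complex^3 \<Rightarrow> complex^3 \<Rightarrow> complex^3 \<Rightarrow> complex^3 \<Rightarrow> complex^3" where
  "Riem k x X Y Z = ddv (\<lambda>y. Chr k y Y Z) x X - ddv (\<lambda>y. Chr k y X Z) x Y
      + Chr k x X (Chr k x Y Z) - Chr k x Y (Chr k x X Z)"

definition Hol :: "nat \<Rightarrow> complex^3 \<Rightarrow> complex^3 \<Rightarrow> real" where
  "Hol k x X = gam k x (Riem k x X (Jc X) (Jc X)) X"

end

(*
  In the chart d = 1 the maps W z = a z with 0 < |a| < 1 form a complex line. In its direction the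
  L2 integrand is radial up to terms odd in z, which gives the metric F(|a|^2) |da|^2 with an
  explicit F (F = 2 pi line_coeff). Differentiating under the integral sign, the derivative of the
  metric coefficient gamma(e0, e0) in an arbitrary direction Z is again determined by the tangential
  component of Z alone, the transversal part contributing an odd integrand. The Koszul formula then
  gives nabla_{e0} e0 = (F'/F)(|a|^2) conj a e0 along the line, so the holomorphic sectional curvature
  of the unit tangent vector of the line is the Gaussian curvature -(2/F)(s F'/F)' of F(s) |da|^2,
  s = |a|^2. As F(s) ~ -2 pi ln s for s -> 0, this curvature behaves like 1/(pi s (-ln s)^3) and is
  unbounded above.
*)
theory Submission
  imports Defs "HOL-Real_Asymp.Real_Asymp"
begin

section \<open>Integrals over the complex plane\<close>

lemma emeasure_lborel_cmod_power2_less: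
  "emeasure (lborel::complex measure) {z. (cmod z)^2 < u} = ennreal (pi * max u 0)"
proof (cases "u \<le> 0")
  case True
  then have "{z::complex. (cmod z)^2 < u} = {}"
    by (auto simp: not_less) (smt (verit) zero_le_power2)
  then show ?thesis using True by (simp add: max_def)
next
  case False
  have "(cmod z)^2 < u \<longleftrightarrow> z \<in> ball 0 (sqrt u)" for z :: complex
    using False by (metis norm_ge_zero real_less_rsqrt real_sqrt_less_iff abs_of_nonneg real_sqrt_abs mem_ball_0)
  then have "{z::complex. (cmod z)^2 < u} = ball 0 (sqrt u)"
    by blast
  then show ?thesis using False by (simp add: emeasure_ball unit_ball_vol_2 max_def)
qed

lemma distr_lborel_cmod_power2:
  "distr (lborel::complex measure) borel (\<lambda>z. (cmod z)^2)
     = density lborel (\<lambda>t. ennreal (pi * indicator {0..} t))"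
  (is "?D = ?R")
proof (rule measure_eqI_generator_eq[where E="range lessThan" and \<Omega>=UNIV and A="\<lambda>i. {..< real i}"])
  have sets_borel: "sets (borel::real measure) = sigma_sets UNIV (range lessThan)"
    by (subst borel_Iio) (simp add: sets_measure_of)
  show "Int_stable (range (lessThan :: real \<Rightarrow> _))"
  proof (rule Int_stableI)
    fix A B :: "real set" assume "A \<in> range lessThan" "B \<in> range lessThan"
    then obtain a b where "A = {..<a}" "B = {..<b}" by auto
    then have "A \<inter> B = {..<min a b}" by auto
    then show "A \<inter> B \<in> range lessThan" by auto
  qed
  show "sets ?D = sigma_sets UNIV (range lessThan)" "sets ?R = sigma_sets UNIV (range lessThan)"
    using sets_borel by simp_all
  show "range lessThan \<subseteq> Pow (UNIV::real set)" "range (\<lambda>i. {..< real i}) \<subseteq> range lessThan"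
    by auto
  show "(\<Union>i. {..< real i}) = UNIV"
    by (auto intro: reals_Archimedean2)
  have D: "emeasure ?D {..<u} = ennreal (pi * max u 0)" for u
    by (subst emeasure_distr) (auto simp: vimage_def emeasure_lborel_cmod_power2_less)
  have R: "emeasure ?R {..<u} = ennreal (pi * max u 0)" for u
  proof -
    have "emeasure ?R {..<u} = (\<integral>\<^sup>+ t. ennreal pi * indicator {0..<u} t \<partial>lborel)"
      by (subst emeasure_density) (auto intro!: nn_integral_cong simp: indicator_def)
    also have "\<dots> = ennreal (pi * max u 0)"
      by (subst nn_integral_cmult_indicator) (auto simp: ennreal_mult' max_def)
    finally show ?thesis .
  qed
  show "emeasure ?D X = emeasure ?R X" if "X \<in> range lessThan" for X
    using that D R by auto
  show "emeasure ?D {..< real i} \<noteq> \<infinity>" for i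
    using D by simp
qed

lemma nn_integral_radial:
  assumes [measurable]: "f \<in> borel_measurable borel"
  shows "(\<integral>\<^sup>+ z. f ((cmod z)^2) \<partial>(lborel::complex measure))
       = (\<integral>\<^sup>+ t. ennreal (pi * indicator {0..} t) * f t \<partial>lborel)"
proof -
  have "(\<integral>\<^sup>+ z. f ((cmod z)^2) \<partial>(lborel::complex measure))
      = (\<integral>\<^sup>+ t. f t \<partial>(distr lborel borel (\<lambda>z::complex. (cmod z)^2)))"
    by (subst nn_integral_distr) auto
  then show ?thesis
    unfolding distr_lborel_cmod_power2 by (subst (asm) nn_integral_density) auto
qed

lemma integral_radial:
  fixes g :: "real \<Rightarrow> real"
  assumes [measurable]: "g \<in> borel_measurable borel"
  shows "(LINT z|(lborel::complex measure). g ((cmod z)^2)) = (LINT t|lborel. pi * indicator {0..} t * g t)"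
proof -
  have "(LINT z|(lborel::complex measure). g ((cmod z)^2))
       = integral\<^sup>L (distr lborel borel (\<lambda>z::complex. (cmod z)^2)) g"
    by (subst integral_distr) auto
  then show ?thesis
    unfolding distr_lborel_cmod_power2 by (subst (asm) integral_density) auto
qed

lemma lborel_distr_uminus_euclidean: "distr lborel borel uminus = (lborel :: 'a::euclidean_space measure)"
proof -
  have "(lborel :: 'a measure) = density (distr lborel borel (\<lambda>x. 0 + (-1::real) *\<^sub>R x)) (\<lambda>_. \<bar>-1::real\<bar>^DIM('a))"
    by (rule lborel_affine) simp
  then show ?thesis by (simp add: density_1)
qed

lemma integral_odd_eq_0:
  fixes f :: "'a::euclidean_space \<Rightarrow> real"
  assumes [measurable]: "f \<in> borel_measurable borel" and odd: "\<And>z. f (-z) = - f z"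
  shows "(LINT z|lborel. f z) = 0"
proof -
  have "(LINT z|lborel. f z) = integral\<^sup>L (distr lborel borel uminus) f"
    by (simp add: lborel_distr_uminus_euclidean)
  also have "\<dots> = - (LINT z|lborel. f z)"
    by (subst integral_distr) (auto simp: odd)
  finally show ?thesis by simp
qed

lemma nn_integral_inverse_one_plus_cmod_power2_squared:
  "(\<integral>\<^sup>+ z. ennreal (1/(1+(cmod z)^2)^2) \<partial>(lborel::complex measure)) = ennreal pi"
proof -
  have "(\<integral>\<^sup>+ z. ennreal (1/(1+(cmod z)^2)^2) \<partial>(lborel::complex measure))
     = (\<integral>\<^sup>+ t. ennreal pi * (ennreal (1/(1+t)^2) * indicator {0..} t) \<partial>lborel)"
    by (subst nn_integral_radial[where f="\<lambda>t. ennreal (1/(1+t)^2)"])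
       (auto intro!: nn_integral_cong simp: indicator_def)
  also have "\<dots> = ennreal pi * (\<integral>\<^sup>+ t. ennreal (1/(1+t)^2) * indicator {0..} t \<partial>lborel)"
    by (rule nn_integral_cmult) measurable
  also have "(\<integral>\<^sup>+ t. ennreal (1/(1+t)^2) * indicator {0..} t \<partial>lborel) = ennreal (0 - (- 1/(1+0)))"
  proof (rule nn_integral_FTC_atLeast)
    show "((\<lambda>t. - 1/(1+t)) has_real_derivative 1/(1+x)^2) (at x)" if "0 \<le> x" for x :: real
      using that by (auto intro!: derivative_eq_intros simp: power2_eq_square field_simps)
    show "((\<lambda>t::real. - 1/(1+t)) \<longlongrightarrow> 0) at_top"
      by real_asymp
  qed auto
  finally show ?thesis by simp
qed

lemma integrable_inverse_one_plus_cmod_power2_squared: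
  "integrable (lborel::complex measure) (\<lambda>z. 1/(1+(cmod z)^2)^2)"
  by (rule integrableI_nonneg)
     (auto simp: nn_integral_inverse_one_plus_cmod_power2_squared)

lemma infinite_AE_lborel:
  assumes "AE x in (lborel::'a::euclidean_space measure). P x"
  shows "infinite {x. P x}"
proof
  assume "finite {x. P x}"
  then have "AE x in lborel. x \<notin> {x. P x}"
    by (intro AE_not_in finite_imp_null_set_lborel)
  with assms have "AE x in (lborel::'a measure). False"
    by eventually_elim simp
  then have "ae_filter (lborel::'a measure) = bot"
    by (simp add: trivial_limit_def)
  then show False
    by (simp add: ae_filter_eq_bot_iff)
qed

lemma tendsto_integral_dominated_at:
  fixes q :: "real \<Rightarrow> 'a \<Rightarrow> real"
  assumes meas: "\<And>y. q y \<in> borel_measurable M" "l \<in> borel_measurable M"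
    and g: "integrable M g"
    and lim: "\<And>z. ((\<lambda>y. q y z) \<longlongrightarrow> l z) (at x)"
    and bound: "eventually (\<lambda>y. \<forall>z. \<bar>q y z\<bar> \<le> g z) (at x)"
  shows "((\<lambda>y. LINT z|M. q y z) \<longlongrightarrow> (LINT z|M. l z)) (at x)"
  unfolding tendsto_at_iff_sequentially comp_def
proof (intro allI impI)
  fix X :: "nat \<Rightarrow> real"
  assume "\<forall>i. X i \<in> UNIV - {x}" and "X \<longlonglongrightarrow> x"
  then have X: "filterlim X (at x) sequentially"
    by (intro filterlim_atI) auto
  then obtain N where N: "\<And>n. N \<le> n \<Longrightarrow> \<forall>z. \<bar>q (X n) z\<bar> \<le> g z"
    using bound unfolding filterlim_iff eventually_sequentially by blast
  have "(\<lambda>n. q (X (n + N)) z) \<longlonglongrightarrow> l z" for z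
    using filterlim_compose[OF lim X] by (rule LIMSEQ_ignore_initial_segment)
  then have "(\<lambda>n. LINT z|M. q (X (n + N)) z) \<longlonglongrightarrow> (LINT z|M. l z)"
    using N by (intro integral_dominated_convergence[where w=g] meas g) auto
  then show "(\<lambda>n. LINT z|M. q (X n) z) \<longlonglongrightarrow> (LINT z|M. l z)"
    by (rule LIMSEQ_offset)
qed

lemma DERIV_integral_dominated:
  fixes f f' :: "real \<Rightarrow> 'a \<Rightarrow> real" and g :: "'a \<Rightarrow> real"
  assumes d: "0 < d"
    and meas: "\<And>t. f t \<in> borel_measurable M" "f' 0 \<in> borel_measurable M"
    and int0: "integrable M (f 0)"
    and der: "\<And>t z. \<bar>t\<bar> < d \<Longrightarrow> ((\<lambda>t. f t z) has_real_derivative f' t z) (at t)"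
    and bnd: "\<And>t z. \<bar>t\<bar> < d \<Longrightarrow> \<bar>f' t z\<bar> \<le> g z"
    and g: "integrable M g"
  shows "integrable M (f' 0)"
    and "((\<lambda>t. LINT z|M. f t z) has_real_derivative (LINT z|M. f' 0 z)) (at 0)"
proof -
  show "integrable M (f' 0)"
    using bnd[of 0] d
    by (intro Bochner_Integration.integrable_bound[OF g meas(2)])
       (auto intro!: AE_I2 intro: order.trans[OF _ abs_ge_self])
  define q where "q h z = (f h z - f 0 z) / h" for h z
  have q_meas: "q h \<in> borel_measurable M" for h
    unfolding q_def using meas by measurable
  have q_bound: "\<bar>q h z\<bar> \<le> g z" if "\<bar>h\<bar> < d" "h \<noteq> 0" for h z
  proof -
    have "\<bar>f h z - f 0 z\<bar> \<le> g z * \<bar>h\<bar>"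
      using field_differentiable_bound[of "ball 0 d" "\<lambda>t. f t z" "\<lambda>t. f' t z" "g z" h 0] that d
        der bnd by (auto simp: has_field_derivative_at_within dist_real_def)
    then show ?thesis using that(2) by (simp add: q_def abs_divide divide_le_eq)
  qed
  have "integrable M (q h)" if "\<bar>h\<bar> < d" "h \<noteq> 0" for h
    by (rule Bochner_Integration.integrable_bound[OF g q_meas])
       (use q_bound[OF that] in \<open>auto intro!: AE_I2 intro: order.trans[OF _ abs_ge_self]\<close>)
  moreover have "f h = (\<lambda>z. f 0 z + h * q h z)" if "h \<noteq> 0" for h
    using that by (auto simp: q_def fun_eq_iff)
  ultimately have quotient: "((LINT z|M. f h z) - (LINT z|M. f 0 z)) / (h - 0) = (LINT z|M. q h z)"
    if "\<bar>h\<bar> < d" "h \<noteq> 0" for h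
    using that int0 by simp
  have near_0: "eventually (\<lambda>h. \<bar>h\<bar> < d \<and> h \<noteq> 0) (at 0)"
    using d by (auto simp: eventually_at dist_real_def intro!: exI[of _ d])
  have "((\<lambda>h. LINT z|M. q h z) \<longlongrightarrow> (LINT z|M. f' 0 z)) (at 0)"
  proof (rule tendsto_integral_dominated_at[OF q_meas meas(2) g])
    show "((\<lambda>h. q h z) \<longlongrightarrow> f' 0 z) (at 0)" for z
      using der[of 0 z] d unfolding has_field_derivative_iff q_def by simp
    show "eventually (\<lambda>h. \<forall>z. \<bar>q h z\<bar> \<le> g z) (at 0)"
      using near_0 by eventually_elim (auto intro: q_bound)
  qed
  then show "((\<lambda>t. LINT z|M. f t z) has_real_derivative (LINT z|M. f' 0 z)) (at 0)"
    unfolding has_field_derivative_iff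
    by (rule tendsto_cong[THEN iffD1, rotated])
       (use near_0 in \<open>eventually_elim, simp add: quotient[symmetric]\<close>)
qed

lemma cmod_add_mult_power2_le:
  fixes p q A B :: complex
  shows "(cmod (p*A + q*B))^2 \<le> ((cmod p)^2 + (cmod q)^2) * ((cmod A)^2 + (cmod B)^2)"
proof -
  have "cmod (p*A + q*B) \<le> cmod p * cmod A + cmod q * cmod B"
    by (metis norm_mult norm_triangle_ineq)
  then have "(cmod (p*A + q*B))^2 \<le> (cmod p * cmod A + cmod q * cmod B)^2"
    by (simp add: power_mono)
  also have "\<dots> \<le> ((cmod p)^2 + (cmod q)^2) * ((cmod A)^2 + (cmod B)^2)"
  proof -
    have "((cmod p)^2 + (cmod q)^2) * ((cmod A)^2 + (cmod B)^2) - (cmod p * cmod A + cmod q * cmod B)^2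
        = (cmod p * cmod B - cmod q * cmod A)^2"
      by algebra
    then show ?thesis by (smt (verit) zero_le_power2)
  qed
  finally show ?thesis .
qed

lemma cmod_mult_add_le: "cmod (a*z + b) \<le> (cmod a + cmod b) * sqrt (1 + (cmod z)^2)"
proof -
  have "cmod z \<le> sqrt (1 + (cmod z)^2)" "1 \<le> sqrt (1 + (cmod z)^2)"
    by (simp_all add: real_le_rsqrt)
  then have "cmod a * cmod z + cmod b * 1 \<le> cmod a * sqrt (1 + (cmod z)^2) + cmod b * sqrt (1 + (cmod z)^2)"
    by (intro add_mono mult_left_mono) auto
  moreover have "cmod (a*z + b) \<le> cmod a * cmod z + cmod b"
    using norm_triangle_ineq[of "a*z" b] by (simp add: norm_mult)
  ultimately show ?thesis by (simp add: distrib_right)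
qed

lemma abs_two_inner_le: "\<bar>2 * inner w q\<bar> \<le> (norm w)^2 + (norm q)^2"
proof -
  have "\<bar>2 * inner w q\<bar> \<le> 2 * (norm w * norm q)"
    using Cauchy_Schwarz_ineq2[of w q] by simp
  also have "\<dots> \<le> (norm w)^2 + (norm q)^2"
    using sum_squares_bound[of "norm w" "norm q"] by simp
  finally show ?thesis .
qed

lemma norm_add_power2_ge: "(norm a)^2/2 - (norm b)^2 \<le> (norm (a + b))^2"
proof -
  have "norm a \<le> norm (a + b) + norm b"
    using norm_triangle_ineq4[of "a + b" b] by simp
  then have "(norm a)^2 \<le> (norm (a + b) + norm b)^2"
    by (simp add: power_mono)
  also have "\<dots> \<le> 2*(norm (a + b))^2 + 2*(norm b)^2"
    using sum_squares_bound[of "norm (a+b)" "norm b"] by (simp add: power2_sum)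
  finally show ?thesis by simp
qed

lemma power2_mult_le_of_abs_less_min:
  fixes t K s :: real
  assumes "0 \<le> K" "0 < s" "\<bar>t\<bar> < min 1 (s/(4*K + 1))"
  shows "t^2 * K \<le> s/4"
proof -
  have "t^2 = \<bar>t\<bar> * \<bar>t\<bar>" by (simp add: power2_eq_square)
  also have "\<dots> \<le> \<bar>t\<bar> * 1" using assms by (intro mult_left_mono) simp_all
  also have "\<dots> \<le> s/(4*K + 1)" using assms by simp
  finally have "t^2 * K \<le> s/(4*K + 1) * K"
    using assms by (intro mult_right_mono)
  also have "\<dots> = s * (K/(4*K + 1))"
    by simp
  also have "\<dots> \<le> s * (1/4)"
    using assms by (intro mult_left_mono) (simp_all add: divide_simps)
  finally show ?thesis by simp
qed

lemma inner_mult_right_same: "inner (a*w) (b*w) = inner a b * (cmod w)^2"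
  unfolding inner_complex_def cmod_power2 by (simp add: algebra_simps power2_eq_square)

lemma inner_cnj_mult_mult:
  "inner (cnj a * \<xi> * \<eta>) \<zeta> = inner a \<xi> * inner \<eta> \<zeta> + inner a \<eta> * inner \<xi> \<zeta> - inner a \<zeta> * inner \<xi> \<eta>"
  by (simp add: inner_complex_def algebra_simps)

lemma DERIV_cmod_power2_line:
  "((\<lambda>t. (cmod (p + t *\<^sub>R q))^2) has_real_derivative 2 * inner (p + t *\<^sub>R q) q) (at t)"
proof -
  have "(cmod (p + t *\<^sub>R q))^2 = (Re p + t * Re q)^2 + (Im p + t * Im q)^2" for t
    by (simp add: cmod_power2)
  then show ?thesis
    by (simp only:) (auto intro!: derivative_eq_intros simp: inner_complex_def algebra_simps)
qed

lemma DERIV_comp_cmod_power2_line: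
  assumes "(h has_real_derivative h') (at ((cmod a)^2))"
  shows "((\<lambda>t. h ((cmod (a + t *\<^sub>R v))^2)) has_real_derivative h' * (2 * inner a v)) (at 0)"
  using DERIV_chain2[OF _ DERIV_cmod_power2_line[of a v 0]] assms by simp

lemma eventually_norm_line_between:
  assumes "lo < norm a" "norm a < hi"
  shows "eventually (\<lambda>t. lo < norm (a + t *\<^sub>R v) \<and> norm (a + t *\<^sub>R v) < hi) (nhds 0)"
proof -
  have "((\<lambda>t. norm (a + t *\<^sub>R v)) \<longlongrightarrow> norm a) (nhds 0)"
    by (auto intro!: tendsto_eq_intros filterlim_ident)
  then show ?thesis
    using assms by (auto intro: eventually_conj order_tendstoD)
qed

section \<open>The metric coefficient of a line and its curvature\<close>

lemma DERIV_divide_one_minus_power: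
  fixes u :: "real \<Rightarrow> real"
  assumes "(u has_real_derivative u') (at s)" "s \<noteq> 1"
  shows "((\<lambda>s. u s / (1-s)^k) has_real_derivative u'/(1-s)^k + k * u s/(1-s)^(k+1)) (at s)"
proof -
  have "((\<lambda>s. u s / (1-s)^k) has_real_derivative
      (u' * (1-s)^k - u s * (- (k * (1-s)^(k-1)))) / ((1-s)^k * (1-s)^k)) (at s)"
    using assms by (auto intro!: derivative_eq_intros)
  moreover have "(u' * (1-s)^k - u s * (- (k * (1-s)^(k-1)))) / ((1-s)^k * (1-s)^k)
      = u'/(1-s)^k + k * u s/(1-s)^(k+1)"
  proof (cases k)
    case (Suc m)
    define w where "w = 1 - s"
    have "w \<noteq> 0" using assms(2) by (simp add: w_def)
    then show ?thesis unfolding w_def[symmetric] Suc by (simp add: field_simps)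
  qed (use assms(2) in simp)
  ultimately show ?thesis by simp
qed

(* The metric along the line of maps z \<mapsto> a z is 2 pi line_coeff (|a|^2) |da|^2
  (integral_line_weight, gam_3_axis_0); the closed form is meant for 0 < s < 1. *)
definition line_coeff :: "real \<Rightarrow> real" where
  "line_coeff s = -(1+s)*ln s/(1-s)^3 - 2/(1-s)^2"

definition line_coeff' :: "real \<Rightarrow> real" where
  "line_coeff' s = (- ln s - (1+s)/s)/(1-s)^3 + 3*(-(1+s)*ln s)/(1-s)^4 - 4/(1-s)^3"

definition line_coeff'' :: "real \<Rightarrow> real" where
  "line_coeff'' s = (1/s^2 - 1/s)/(1-s)^3 + 6*(- ln s - (1+s)/s)/(1-s)^4
     + 12*(-(1+s)*ln s)/(1-s)^5 - 12/(1-s)^4"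

lemma DERIV_line_coeff:
  assumes "0 < s" "s < 1" shows "(line_coeff has_real_derivative line_coeff' s) (at s)"
proof -
  have "((\<lambda>s. -(1+s)*ln s) has_real_derivative - ln s - (1+s)/s) (at s)"
    using assms by (auto intro!: derivative_eq_intros simp: field_simps)
  from DERIV_diff[OF DERIV_divide_one_minus_power[OF this, of 3]
      DERIV_divide_one_minus_power[OF DERIV_const[of 2], of s 2]]
  have "((\<lambda>s. -(1+s)*ln s/(1-s)^3 - 2/(1-s)^2) has_real_derivative line_coeff' s) (at s)"
    using assms by (simp add: line_coeff'_def)
  then show ?thesis
    by (simp add: line_coeff_def[abs_def])
qed

lemma DERIV_line_coeff':
  assumes "0 < s" "s < 1" shows "(line_coeff' has_real_derivative line_coeff'' s) (at s)"
proof -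
  have u1: "((\<lambda>s. - ln s - (1+s)/s) has_real_derivative 1/s^2 - 1/s) (at s)"
    using assms by (auto intro!: derivative_eq_intros simp: field_simps power2_eq_square)
  have u2: "((\<lambda>s. 3*(-(1+s)*ln s)) has_real_derivative 3*(- ln s - (1+s)/s)) (at s)"
    using assms by (auto intro!: derivative_eq_intros simp: field_simps)
  from DERIV_diff[OF DERIV_add[OF DERIV_divide_one_minus_power[OF u1, of 3]
      DERIV_divide_one_minus_power[OF u2, of 4]]
      DERIV_divide_one_minus_power[OF DERIV_const[of 4], of s 3]]
  have "((\<lambda>s. (- ln s - (1+s)/s)/(1-s)^3 + 3*(-(1+s)*ln s)/(1-s)^4 - 4/(1-s)^3)
      has_real_derivative line_coeff'' s) (at s)"
    using assms by (simp add: line_coeff''_def add_ac)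
  then show ?thesis
    by (simp add: line_coeff'_def[abs_def])
qed

definition line_phi :: "real \<Rightarrow> real" where
  "line_phi s = line_coeff' s / line_coeff s"

definition line_phi' :: "real \<Rightarrow> real" where
  "line_phi' s = (line_coeff'' s * line_coeff s - (line_coeff' s)^2) / (line_coeff s)^2"

(* The Gaussian curvature -(2/F) (s F'/F)' of the metric F(|a|^2) |da|^2, F = 2 pi line_coeff,
  at s = |a|^2. *)
definition line_curvature :: "real \<Rightarrow> real" where
  "line_curvature s = -2 * (line_phi s + s * line_phi' s) / (2*pi*line_coeff s)"

lemma filterlim_line_curvature: "filterlim line_curvature at_top (at_right 0)"
  unfolding line_curvature_def[abs_def] line_phi_def line_phi'_def line_coeff_def line_coeff'_def
    line_coeff''_def
  by real_asymp

lemma ln_less_two_diff_div_sum: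
  fixes s :: real assumes "0 < s" "s < 1"
  shows "ln s < 2*(s-1)/(s+1)"
proof -
  define h where "h s = ln s + 2*(1-s)/(1+s)" for s :: real
  have "h s < h 1"
  proof (rule DERIV_pos_imp_increasing_open[OF assms(2)])
    fix x :: real assume x: "s < x" "x < 1"
    have "(h has_real_derivative 1/x + (-2*(1+x) - 2*(1-x))/((1+x)*(1+x))) (at x)"
      unfolding h_def using x assms by (auto intro!: derivative_eq_intros)
    moreover have "4/((1+x)*(1+x)) < 1/x"
    proof -
      have "0 < (1-x)^2" using x by simp
      then have "4*x < (1+x)*(1+x)" by (simp add: power2_eq_square algebra_simps)
      then show ?thesis using x assms by (simp add: divide_simps)
    qed
    ultimately show "\<exists>y. (h has_real_derivative y) (at x) \<and> 0 < y"
      by (intro exI[of _ "1/x + (-2*(1+x) - 2*(1-x))/((1+x)*(1+x))"]) (simp add: diff_divide_distrib)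
  next
    show "continuous_on {s..1} h"
      unfolding h_def using assms by (intro continuous_intros) auto
  qed
  moreover have "0 < 1 + s" using assms by simp
  ultimately show ?thesis by (simp add: h_def field_simps)
qed

lemma line_coeff_pos:
  assumes "0 < s" "s < 1" shows "0 < line_coeff s"
proof -
  have "line_coeff s = (-(1+s)*ln s - 2*(1-s))/(1-s)^3"
  proof -
    have "2/w^2 = 2*w/w^3" if "w \<noteq> 0" for w :: real
      using that by (simp add: power3_eq_cube power2_eq_square)
    then have "2/(1-s)^2 = 2*(1-s)/(1-s)^3" using assms by simp
    then show ?thesis by (simp add: line_coeff_def diff_divide_distrib)
  qed
  moreover have "2*(1-s) < -(1+s)*ln s"
  proof -
    have "0 < 1 + s" using assms by simp
    then show ?thesis using ln_less_two_diff_div_sum[OF assms] by (simp add: field_simps)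
  qed
  ultimately show ?thesis using assms by simp
qed

lemma DERIV_line_phi:
  assumes "0 < s" "s < 1" shows "(line_phi has_real_derivative line_phi' s) (at s)"
  using DERIV_divide[OF DERIV_line_coeff'[OF assms] DERIV_line_coeff[OF assms]] line_coeff_pos[OF assms]
  unfolding line_phi_def[abs_def] line_phi'_def by (simp add: power2_eq_square)

(* Partial fractions of x/((1 + x)^2 (1 + s x)^2), written with u = 1 + x, q = 1 + s x, w = 1 - s. *)
lemma partial_fractions_line_weight:
  fixes u q w :: real assumes "u \<noteq> 0" "q \<noteq> 0" "w \<noteq> 0" and q: "q = 1 + (1-w)*(u-1)"
  shows "(2-w)/w^3 * (1/u - (1-w)/q) - 1/(w^2*u^2) - (1-w)/(w^2*q^2) = (u-1)/(u^2*q^2)"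
proof -
  have "(2-w)/w^3 * (1/u - (1-w)/q) - 1/(w^2*u^2) - (1-w)/(w^2*q^2)
     = ((2-w)*u*q*(q - (1-w)*u) - w*q^2 - (1-w)*w*u^2) / (w^3*(u^2*q^2))"
    using assms(1-3) by (simp add: field_simps power2_eq_square power3_eq_cube)
  also have "(2-w)*u*q*(q - (1-w)*u) - w*q^2 - (1-w)*w*u^2 = w^3*(u-1)"
    unfolding q by algebra
  finally show ?thesis using assms(3) by simp
qed

lemma line_weight_antiderivative:
  fixes s x :: real assumes "0 < s" "s < 1" "0 \<le> x"
  shows "((\<lambda>t. (1+s)/(1-s)^3*(ln(1+t) - ln(1+s*t)) + 1/(1-s)^2*inverse(1+t) + 1/(1-s)^2*inverse(1+s*t))
      has_real_derivative x/((1+x)^2*(1+s*x)^2)) (at x)"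
proof -
  have p: "0 < 1 + x" "0 < 1 + s*x" using assms by (auto intro: add_pos_nonneg)
  have "((\<lambda>t. ln(1+t)) has_real_derivative 1/(1+x)) (at x)"
    and "((\<lambda>t. ln(1+s*t)) has_real_derivative s/(1+s*x)) (at x)"
    using p by (auto intro!: derivative_eq_intros)
  moreover have "((\<lambda>t. inverse(1+t)) has_real_derivative -1/(1+x)^2) (at x)"
    and "((\<lambda>t. inverse(1+s*t)) has_real_derivative -s/(1+s*x)^2) (at x)"
    using p by (auto intro!: derivative_eq_intros simp: power2_eq_square divide_simps)
  ultimately have "((\<lambda>t. (1+s)/(1-s)^3*(ln(1+t) - ln(1+s*t)) + 1/(1-s)^2*inverse(1+t) + 1/(1-s)^2*inverse(1+s*t))
      has_real_derivative (1+s)/(1-s)^3*(1/(1+x) - s/(1+s*x)) + 1/(1-s)^2*(-1/(1+x)^2) + 1/(1-s)^2*(-s/(1+s*x)^2)) (at x)"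
    by (intro DERIV_add DERIV_cmult DERIV_diff)
  moreover have "(1+s)/(1-s)^3*(1/(1+x) - s/(1+s*x)) + 1/(1-s)^2*(-1/(1+x)^2) + 1/(1-s)^2*(-s/(1+s*x)^2)
      = x/((1+x)^2*(1+s*x)^2)"
  proof -
    have "(1+s)/(1-s)^3*(1/(1+x) - s/(1+s*x)) + 1/(1-s)^2*(-1/(1+x)^2) + 1/(1-s)^2*(-s/(1+s*x)^2)
        = (2-(1-s))/(1-s)^3 * (1/(1+x) - (1-(1-s))/(1+s*x)) - 1/((1-s)^2*(1+x)^2)
          - (1-(1-s))/((1-s)^2*(1+s*x)^2)"
      by simp
    also have "\<dots> = ((1+x)-1)/((1+x)^2*(1+s*x)^2)"
      by (rule partial_fractions_line_weight) (use p assms in auto)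
    finally show ?thesis by simp
  qed
  ultimately show ?thesis by simp
qed

lemma integral_line_weight_halfline:
  fixes s :: real assumes s: "0 < s" "s < 1"
  shows "(LINT t|lborel. t/((1+t)^2*(1+s*t)^2) * indicator {0..} t) = line_coeff s"
proof -
  define g where "g t = t/((1+t)^2*(1+s*t)^2)" for t :: real
  define G where "G t = (1+s)/(1-s)^3*(ln(1+t) - ln(1+s*t)) + 1/(1-s)^2*inverse(1+t)
    + 1/(1-s)^2*inverse(1+s*t)" for t :: real
  have [measurable]: "g \<in> borel_measurable borel"
    unfolding g_def by measurable
  have g_nonneg: "0 \<le> g t" if "0 \<le> t" for t
    using that s by (simp add: g_def)
  have "(\<integral>\<^sup>+ t. ennreal (g t * indicator {0..} t) \<partial>lborel)
      = (\<integral>\<^sup>+ t. ennreal (g t) * indicator {0..} t \<partial>lborel)"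
    by (intro nn_integral_cong) (simp add: indicator_def)
  also have "\<dots> = - ((1+s)*ln s/(1-s)^3) - G 0"
  proof (rule nn_integral_FTC_atLeast)
    show "(G has_real_derivative g x) (at x)" if "0 \<le> x" for x
      using line_weight_antiderivative[OF s that] unfolding G_def[abs_def] g_def by simp
    show "(G \<longlongrightarrow> - ((1+s)*ln s/(1-s)^3)) at_top"
      unfolding G_def using s by real_asymp
  qed (auto simp: g_nonneg)
  also have "- ((1+s)*ln s/(1-s)^3) - G 0 = line_coeff s"
  proof -
    have "- ((1+s)*ln s/(1-s)^3) = -(1+s)*ln s/(1-s)^3"
      by (metis minus_divide_left mult_minus_left)
    then show ?thesis by (simp add: G_def line_coeff_def)
  qed
  finally have nn: "(\<integral>\<^sup>+ t. ennreal (g t * indicator {0..} t) \<partial>lborel) = line_coeff s" .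
  have "AE t in lborel. 0 \<le> g t * indicator {0..} t"
    using g_nonneg by (intro AE_I2) (simp add: indicator_def)
  then have "(LINT t|lborel. g t * indicator {0..} t)
      = enn2real (\<integral>\<^sup>+ t. ennreal (g t * indicator {0..} t) \<partial>lborel)"
    by (intro integral_eq_nn_integral) measurable
  then have "(LINT t|lborel. g t * indicator {0..} t) = line_coeff s"
    using line_coeff_pos[OF s] by (simp add: nn)
  then show ?thesis
    by (simp add: g_def)
qed

lemma integral_line_weight:
  fixes s :: real assumes s: "0 < s" "s < 1"
  shows "(LINT z|(lborel::complex measure). 2*(cmod z)^2/((1+(cmod z)^2)^2*(1+s*(cmod z)^2)^2))
    = 2*pi*line_coeff s"
proof -
  have "(LINT z|(lborel::complex measure). 2*(cmod z)^2/((1+(cmod z)^2)^2*(1+s*(cmod z)^2)^2))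
      = (LINT t|lborel. pi * indicator {0..} t * (2 * (t/((1+t)^2*(1+s*t)^2))))"
    using integral_radial[of "\<lambda>t. 2 * (t/((1+t)^2*(1+s*t)^2))"] by simp
  also have "\<dots> = (LINT t|lborel. 2*pi * (t/((1+t)^2*(1+s*t)^2) * indicator {0..} t))"
    by (intro Bochner_Integration.integral_cong) simp_all
  also have "\<dots> = 2*pi * (LINT t|lborel. t/((1+t)^2*(1+s*t)^2) * indicator {0..} t)"
    by (rule integral_mult_right_zero)
  also have "\<dots> = 2*pi*line_coeff s"
    by (simp only: integral_line_weight_halfline[OF s])
  finally show ?thesis .
qed

lemma DERIV_metric_coeff_line:
  assumes "0 < cmod a" "cmod a < 1"
  shows "((\<lambda>t. 2*pi*line_coeff ((cmod (a + t *\<^sub>R v))^2)) has_real_derivative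
      2*pi*line_coeff' ((cmod a)^2) * (2 * inner a v)) (at 0)"
proof -
  have "((\<lambda>t. line_coeff ((cmod (a + t *\<^sub>R v))^2)) has_real_derivative
      line_coeff' ((cmod a)^2) * (2 * inner a v)) (at 0)"
    using assms by (intro DERIV_comp_cmod_power2_line DERIV_line_coeff) (simp_all add: power_less_one_iff)
  from DERIV_cmult[OF this, of "2*pi"] show ?thesis
    by (simp add: mult.assoc)
qed

section \<open>The metric in the chart d = 1\<close>

(* A point x = (a, b, c) of the chart d = 1 is the map W z = (a z + b)/(c z + 1). With
  N = var_numer x u one has Wdot = N/(c z + 1)^2 and 1 + |W|^2 = denom_norm x z / |c z + 1|^2,
  so the integrand of the L2 metric is weight x z * |N|^2 (lemma L2Q_3_eq). *)
definition var_numer :: "complex^3 \<Rightarrow> complex^3 \<Rightarrow> complex \<Rightarrow> complex" where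
  "var_numer x u z = (u$0*z + u$1)*(x$2*z + 1) - (x$0*z + x$1)*(u$2*z)"

definition denom_norm :: "complex^3 \<Rightarrow> complex \<Rightarrow> real" where
  "denom_norm x z = (cmod (x$0*z + x$1))^2 + (cmod (x$2*z + 1))^2"

definition weight :: "complex^3 \<Rightarrow> complex \<Rightarrow> real" where
  "weight x z = 2 / ((1 + (cmod z)^2)^2 * (denom_norm x z)^2)"

definition det3 :: "complex^3 \<Rightarrow> complex" where
  "det3 x = x$0 - x$1*x$2"

definition metric_density :: "complex^3 \<Rightarrow> complex^3 \<Rightarrow> complex^3 \<Rightarrow> complex \<Rightarrow> real" where
  "metric_density x u v z = weight x z * inner (var_numer x u z) (var_numer x v z)"

lemma chart_dom_3_iff: "x \<in> chart_dom 3 \<longleftrightarrow> det3 x \<noteq> 0"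
  by (simp add: chart_dom_def chart_def in_M1_def det3_def)

lemma L2Q_3_eq: "L2Q 3 x u = (LINT z|lborel. weight x z * (cmod (var_numer x u z))^2)"
proof -
  have eq: "2/(1+a^2)^2 * (n/d^2)^2/(1+(m/d)^2)^2 = 2/((1+a^2)^2*(m^2+d^2)^2)*n^2"
    if "d \<noteq> 0" for a n m d :: real
  proof -
    define e where "e = d^2"
    have e: "e \<noteq> 0" using that by (simp add: e_def)
    have "1 + (m/d)^2 = (m^2+e)/e" using e by (simp add: e_def field_simps power_divide)
    then have "2/(1+a^2)^2 * (n/d^2)^2/(1+(m/d)^2)^2 = 2/(1+a^2)^2 * (n^2/e^2)/((m^2+e)^2/e^2)"
      by (simp add: e_def power_divide)
    also have "\<dots> = 2/((1+a^2)^2*(m^2+e)^2)*n^2"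
      using e by (simp add: field_simps)
    finally show ?thesis by (simp add: e_def)
  qed
  have "AE z in lborel. 2/(1+(cmod z)^2)^2 * (cmod (var_numer x u z / (x$2*z+1)^2))^2
      / (1 + (cmod ((x$0*z+x$1)/(x$2*z+1)))^2)^2 = weight x z * (cmod (var_numer x u z))^2"
    using AE_lborel_singleton[of "-1/x$2"]
  proof eventually_elim
    case (elim z)
    have "x$2*z + 1 \<noteq> 0"
    proof
      assume h: "x$2*z + 1 = 0"
      then have "x$2 \<noteq> 0" by auto
      with h have "z = -1/x$2" by (simp add: field_simps add_eq_0_iff)
      with elim show False by simp
    qed
    then show ?case
      using eq[of "cmod (x$2*z + 1)" "cmod z" "cmod (var_numer x u z)" "cmod (x$0*z+x$1)"]
      by (simp add: norm_divide norm_power weight_def denom_norm_def mult.commute)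
  qed
  then show ?thesis
    unfolding L2Q_def chart_def chart_var_def Wmap_def Wdot_def
    by (intro integral_cong_AE) (auto simp: var_numer_def weight_def denom_norm_def)
qed

lemma denom_norm_lower:
  "(cmod (det3 x))^2 * (1 + (cmod z)^2)
     \<le> (1 + (cmod (x$0))^2 + (cmod (x$1))^2 + (cmod (x$2))^2) * denom_norm x z"
proof -
  define M D where "M = x$0*z + x$1" and "D = x$2*z + 1"
  have e1: "det3 x * z = 1*M + (-x$1)*D" and e2: "det3 x = (-x$2)*M + x$0*D"
    by (simp_all add: det3_def M_def D_def algebra_simps)
  have "(cmod (det3 x))^2 * (cmod z)^2 = (cmod (det3 x * z))^2"
    by (simp add: norm_mult power_mult_distrib)
  also have "\<dots> \<le> (1 + (cmod (x$1))^2) * denom_norm x z"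
    using cmod_add_mult_power2_le[of 1 M "-x$1" D] by (simp add: e1 denom_norm_def M_def D_def)
  finally have "(cmod (det3 x))^2 * (cmod z)^2 \<le> (1 + (cmod (x$1))^2) * denom_norm x z" .
  moreover have "(cmod (det3 x))^2 \<le> ((cmod (x$2))^2 + (cmod (x$0))^2) * denom_norm x z"
    using cmod_add_mult_power2_le[of "-x$2" M "x$0" D] by (simp add: e2 denom_norm_def M_def D_def)
  ultimately show ?thesis by (simp add: algebra_simps)
qed

lemma var_numer_bound: "\<exists>K. \<forall>z. cmod (var_numer x u z) \<le> K * (1 + (cmod z)^2)"
proof (intro exI allI)
  fix z
  define \<rho> where "\<rho> = sqrt (1 + (cmod z)^2)"
  have "cmod (var_numer x u z) \<le> cmod (u$0*z + u$1) * cmod (x$2*z + 1) + cmod (x$0*z + x$1) * cmod (u$2*z + 0)"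
    unfolding var_numer_def
    using norm_triangle_ineq4[of "(u$0*z + u$1) * (x$2*z + 1)" "(x$0*z + x$1) * (u$2*z)"]
    by (simp add: norm_mult)
  also have "\<dots> \<le> ((cmod (u$0) + cmod (u$1)) * \<rho>) * ((cmod (x$2) + cmod 1) * \<rho>)
      + ((cmod (x$0) + cmod (x$1)) * \<rho>) * ((cmod (u$2) + cmod 0) * \<rho>)"
    unfolding \<rho>_def by (intro add_mono mult_mono cmod_mult_add_le) auto
  also have "\<dots> = ((cmod (u$0) + cmod (u$1)) * (cmod (x$2) + 1) + (cmod (x$0) + cmod (x$1)) * cmod (u$2))
      * (1 + (cmod z)^2)"
    by (simp add: \<rho>_def algebra_simps flip: power2_eq_square)
  finally show "cmod (var_numer x u z) \<le> ((cmod (u$0) + cmod (u$1)) * (cmod (x$2) + 1)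
      + (cmod (x$0) + cmod (x$1)) * cmod (u$2)) * (1 + (cmod z)^2)" .
qed

lemma metric_density_bound:
  assumes "det3 x \<noteq> 0"
  shows "\<exists>C. \<forall>z. \<bar>metric_density x u v z\<bar> \<le> C * (1/(1+(cmod z)^2)^2)"
proof -
  obtain Ku Kv where Ku: "\<And>z. cmod (var_numer x u z) \<le> Ku * (1 + (cmod z)^2)"
    and Kv: "\<And>z. cmod (var_numer x v z) \<le> Kv * (1 + (cmod z)^2)"
    using var_numer_bound by metis
  define c where "c = (cmod (det3 x))^2 / (1 + (cmod (x$0))^2 + (cmod (x$1))^2 + (cmod (x$2))^2)"
  have c: "0 < c"
    using assms by (simp add: c_def add_pos_nonneg)
  have "\<bar>metric_density x u v z\<bar> \<le> 2*Ku*Kv/c^2 * (1/(1+(cmod z)^2)^2)" for z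
  proof -
    define R where "R = 1 + (cmod z)^2"
    have R: "1 \<le> R" by (simp add: R_def)
    have cR: "0 < c * R" using c R by simp
    have D: "c * R \<le> denom_norm x z"
      using denom_norm_lower[of x z] by (simp add: c_def R_def field_simps add_pos_nonneg)
    then have "R^2 * (c*R)^2 \<le> R^2 * (denom_norm x z)^2"
      using cR by (intro mult_left_mono power_mono) auto
    moreover have "0 < R^2 * (denom_norm x z)^2 * (R^2 * (c*R)^2)"
      using cR D R by (intro mult_pos_pos) auto
    ultimately have "weight x z \<le> 2 / (R^2 * (c*R)^2)"
      unfolding weight_def R_def[symmetric] by (intro divide_left_mono) auto
    moreover have "\<bar>inner (var_numer x u z) (var_numer x v z)\<bar> \<le> (Ku * R) * (Kv * R)"
    proof -
      have "0 \<le> Ku * R" unfolding R_def by (rule order.trans[OF norm_ge_zero Ku])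
      then show ?thesis
        using Cauchy_Schwarz_ineq2[of "var_numer x u z" "var_numer x v z"]
          mult_mono[OF Ku[of z] Kv[of z]]
        by (simp add: R_def)
    qed
    moreover have "0 \<le> weight x z" by (simp add: weight_def)
    ultimately have "\<bar>metric_density x u v z\<bar> \<le> 2 / (R^2 * (c*R)^2) * ((Ku * R) * (Kv * R))"
      unfolding metric_density_def abs_mult
      by (intro mult_mono) auto
    also have "\<dots> = 2*Ku*Kv/c^2 * (1/R^2)"
      using R by (simp add: field_simps power2_eq_square)
    finally show ?thesis by (simp add: R_def)
  qed
  then show ?thesis by blast
qed

lemma integrable_metric_density:
  assumes "det3 x \<noteq> 0" shows "integrable lborel (metric_density x u v)"
proof -
  obtain C where C: "\<And>z. \<bar>metric_density x u v z\<bar> \<le> C * (1/(1+(cmod z)^2)^2)"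
    using metric_density_bound[OF assms] by blast
  show ?thesis
    using integrable_inverse_one_plus_cmod_power2_squared
  proof (rule Bochner_Integration.integrable_bound[OF integrable_mult_right[where c="\<bar>C\<bar>"]])
    have "\<bar>metric_density x u v z\<bar> \<le> \<bar>C\<bar> * (1/(1+(cmod z)^2)^2)" for z
      using C[of z] by (rule order.trans) (intro mult_right_mono abs_ge_self, simp)
    then show "AE z in lborel. norm (metric_density x u v z) \<le> norm (\<bar>C\<bar> * (1/(1+(cmod z)^2)^2))"
      by (intro AE_I2) (simp add: abs_mult)
  qed (unfold metric_density_def weight_def denom_norm_def var_numer_def, measurable)
qed

lemma gam_3_eq:
  assumes "det3 x \<noteq> 0"
  shows "gam 3 x u v = (LINT z|lborel. metric_density x u v z)"
proof -
  have polar: "(metric_density x (u+v) (u+v) z - metric_density x (u-v) (u-v) z) / 4 = metric_density x u v z" for z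
  proof -
    have "inner (a+b) (a+b) - inner (a-b) (a-b) = 4 * inner a b" for a b :: complex
      by (simp add: inner_add_left inner_add_right inner_diff_left inner_diff_right inner_commute)
    moreover have "var_numer x (u+v) z = var_numer x u z + var_numer x v z"
      "var_numer x (u-v) z = var_numer x u z - var_numer x v z"
      by (simp_all add: var_numer_def algebra_simps)
    ultimately show ?thesis
      unfolding metric_density_def by (simp only: right_diff_distrib[symmetric])
  qed
  have "L2Q 3 x w = (LINT z|lborel. metric_density x w w z)" for w
    by (simp add: L2Q_3_eq metric_density_def power2_norm_eq_inner)
  then have "gam 3 x u v = (LINT z|lborel. metric_density x (u+v) (u+v) z - metric_density x (u-v) (u-v) z) / 4"
    using integrable_metric_density[OF assms] by (simp add: gam_def)
  also have "\<dots> = (LINT z|lborel. (metric_density x (u+v) (u+v) z - metric_density x (u-v) (u-v) z) / 4)"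
    by simp
  also have "\<dots> = (LINT z|lborel. metric_density x u v z)"
    unfolding polar ..
  finally show ?thesis .
qed

lemma weight_pos:
  assumes "det3 x \<noteq> 0" shows "0 < weight x z"
proof -
  have "0 < (cmod (det3 x))^2 * (1 + (cmod z)^2)"
    using assms by (simp add: add_pos_nonneg)
  moreover have "0 < 1 + (cmod (x$0))^2 + (cmod (x$1))^2 + (cmod (x$2))^2"
    by (simp add: add_pos_nonneg)
  ultimately have "0 < denom_norm x z"
    using order.strict_trans2[OF _ denom_norm_lower[of x z]] zero_less_mult_pos by blast
  moreover have "0 < 1 + (cmod z)^2"
    by (simp add: add_pos_nonneg)
  ultimately show ?thesis
    by (simp add: weight_def)
qed

lemma gam_3_self_eq_0D:
  assumes dx: "det3 x \<noteq> 0" and "gam 3 x w w = 0"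
  shows "w = 0"
proof -
  have "AE z in lborel. 0 \<le> metric_density x w w z"
    using weight_pos[OF dx] by (intro AE_I2) (simp add: metric_density_def less_imp_le)
  moreover have "(LINT z|lborel. metric_density x w w z) = 0"
    using assms by (simp add: gam_3_eq)
  ultimately have "AE z in lborel. metric_density x w w z = 0"
    using integral_nonneg_eq_0_iff_AE[OF integrable_metric_density[OF dx]] by simp
  then have "AE z in lborel. var_numer x w z = 0"
    by eventually_elim (use weight_pos[OF dx] in \<open>auto simp: metric_density_def less_le\<close>)
  then have "infinite {z. var_numer x w z = 0}"
    by (rule infinite_AE_lborel)
  moreover define c where "c = (\<lambda>i. [w$1, w$0 + w$1*x$2 - x$1*w$2, w$0*x$2 - x$0*w$2] ! i)"
  moreover have "var_numer x w z = (\<Sum>i\<le>2. c i * z^i)" for z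
    by (simp add: c_def var_numer_def numeral_2_eq_2 algebra_simps power2_eq_square)
  ultimately have "\<forall>k\<le>2. c k = 0"
    using polyfun_finite_roots[of c 2] by simp
  then have "c 0 = 0" "c 1 = 0" "c 2 = 0"
    by simp_all
  then have w1: "w$1 = 0" and w0: "w$0 = x$1*w$2" and c2: "w$0*x$2 - x$0*w$2 = 0"
    by (simp_all add: c_def)
  have "det3 x * w$2 = - (w$0*x$2 - x$0*w$2)"
    by (simp add: det3_def w0 algebra_simps)
  then have "det3 x * w$2 = 0"
    unfolding c2 by simp
  then have w2: "w$2 = 0" using dx by simp
  have "w$i = 0" for i :: 3
  proof -
    have "i = 0 \<or> i = 1 \<or> i = 2" using exhaust_3[of i] by auto
    then show ?thesis using w0 w1 w2 by auto
  qed
  then show "w = 0"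
    by (simp add: vec_eq_iff)
qed

lemma gam_3_unique:
  assumes dx: "det3 x \<noteq> 0" and eq: "\<And>Z. gam 3 x v Z = gam 3 x w Z"
  shows "v = w"
proof -
  have "metric_density x (v - w) Z z = metric_density x v Z z - metric_density x w Z z" for Z z
    by (simp add: metric_density_def var_numer_def inner_diff_left algebra_simps)
  then have "gam 3 x (v - w) (v - w) = 0"
    using eq integrable_metric_density[OF dx] by (simp add: gam_3_eq[OF dx])
  then have "v - w = 0"
    by (rule gam_3_self_eq_0D[OF dx])
  then show ?thesis by simp
qed

section \<open>The line of maps z \<mapsto> a z\<close>

(* The map W z = a z is the point axis 0 a of the chart; for 0 < |a| < 1 these points form a
  complex line whose tangent vectors are the axis 0 xi. *)
lemma axis_0_nth [simp]: "(axis 0 a :: 'a::zero^3) $ 1 = 0" "(axis 0 a :: 'a::zero^3) $ 2 = 0"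
  by (simp_all add: axis_def)

lemma axis_0_add: "axis 0 (a + b) = (axis 0 a + axis 0 b :: complex^3)"
  by (simp add: vec_eq_iff axis_def)

lemma axis_0_diff: "axis 0 (a - b) = (axis 0 a - axis 0 b :: complex^3)"
  by (simp add: vec_eq_iff axis_def)

lemma axis_0_add_scaleR: "axis 0 a + t *\<^sub>R axis 0 v = (axis 0 (a + t *\<^sub>R v) :: complex^3)"
  by (simp add: vec_eq_iff axis_def)

lemma bounded_linear_axis_0: "bounded_linear (axis 0 :: complex \<Rightarrow> complex^3)"
proof -
  have "linear (axis 0 :: complex \<Rightarrow> complex^3)"
    by (rule linearI) (simp_all add: vec_eq_iff axis_def)
  then show ?thesis by (simp add: linear_conv_bounded_linear)
qed

lemma det3_axis_0 [simp]: "det3 (axis 0 a) = a"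
  by (simp add: det3_def)

lemma weight_axis_0:
  "weight (axis 0 a) z = 2/((1+(cmod z)^2)^2 * (1 + (cmod a)^2 * (cmod z)^2)^2)"
  by (simp add: weight_def denom_norm_def norm_mult power_mult_distrib)

lemma var_numer_axis_0:
  "var_numer y (axis 0 \<xi>) z = \<xi> * (z * (y$2*z + 1))"
  "var_numer (axis 0 a) v z = v$0 * z + (v$1 - a * v$2 * z^2)"
  by (simp_all add: var_numer_def algebra_simps power2_eq_square)

lemma gam_3_axis_0:
  assumes a: "0 < cmod a" "cmod a < 1"
  shows "gam 3 (axis 0 a) (axis 0 \<xi>) v = 2*pi*line_coeff ((cmod a)^2) * inner \<xi> (v$0)"
proof -
  define e where "e = (axis 0 1 :: complex^3)"
  define odd where "odd z = weight (axis 0 a) z * inner (\<xi>*z) (v$1 - a * v$2 * z^2)" for z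
  have dx: "det3 (axis 0 a) \<noteq> 0" using a by auto
  have md_e: "metric_density (axis 0 a) e e z = weight (axis 0 a) z * (cmod z)^2" for z
    by (simp add: metric_density_def var_numer_axis_0 e_def power2_norm_eq_inner)
  have split: "metric_density (axis 0 a) (axis 0 \<xi>) v z
      = inner \<xi> (v$0) * metric_density (axis 0 a) e e z + odd z" for z
  proof -
    have "var_numer (axis 0 a) (axis 0 \<xi>) z = \<xi> * z"
      by (simp add: var_numer_axis_0)
    moreover have "inner (\<xi>*z) (v$0*z + (v$1 - a * v$2 * z^2))
        = inner \<xi> (v$0) * (cmod z)^2 + inner (\<xi>*z) (v$1 - a * v$2 * z^2)"
      by (simp only: inner_add_right inner_mult_right_same)
    ultimately show ?thesis
      unfolding md_e odd_def metric_density_def[of _ "axis 0 \<xi>"] var_numer_axis_0(2)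
      by (simp add: distrib_left mult_ac)
  qed
  have "integrable lborel odd"
  proof -
    have "odd = (\<lambda>z. metric_density (axis 0 a) (axis 0 \<xi>) v z - inner \<xi> (v$0) * metric_density (axis 0 a) e e z)"
      by (simp add: split fun_eq_iff)
    then show ?thesis using integrable_metric_density[OF dx] by simp
  qed
  moreover have "(LINT z|lborel. odd z) = 0"
  proof (rule integral_odd_eq_0)
    show "odd \<in> borel_measurable borel"
      unfolding odd_def weight_def denom_norm_def by measurable
    show "odd (-z) = - odd z" for z
      by (simp add: odd_def weight_axis_0 inner_minus_left)
  qed
  moreover have "(LINT z|lborel. metric_density (axis 0 a) e e z) = 2*pi*line_coeff ((cmod a)^2)"
    using integral_line_weight[of "(cmod a)^2"] a
    by (simp add: md_e weight_axis_0 power_less_one_iff mult.commute)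
  ultimately show ?thesis
    using integrable_metric_density[OF dx] by (simp add: gam_3_eq[OF dx] split)
qed

(* gam at y of (axis 0 1, axis 0 1), see gam_3_axis_0_axis_0; written as an integral it is defined
  at every y, which is what differentiating along arbitrary lines needs. *)
definition g00 :: "complex^3 \<Rightarrow> real" where
  "g00 y = (LINT z|lborel. weight y z * (cmod (z * (y$2*z + 1)))^2)"

lemma gam_3_axis_0_axis_0:
  assumes "det3 y \<noteq> 0"
  shows "gam 3 y (axis 0 \<xi>) (axis 0 \<eta>) = inner \<xi> \<eta> * g00 y"
proof -
  have "metric_density y (axis 0 \<xi>) (axis 0 \<eta>) z = inner \<xi> \<eta> * (weight y z * (cmod (z * (y$2*z + 1)))^2)" for z
    unfolding metric_density_def var_numer_axis_0 inner_mult_right_same by simp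
  then show ?thesis by (simp add: gam_3_eq[OF assms] g00_def)
qed

lemma g00_axis_0:
  assumes "0 < cmod a" "cmod a < 1"
  shows "g00 (axis 0 a) = 2*pi*line_coeff ((cmod a)^2)"
  using gam_3_axis_0[OF assms, of 1 "axis 0 1"] gam_3_axis_0_axis_0[of "axis 0 a" 1 1] assms by simp

section \<open>Derivatives of the metric at points of the line\<close>

(* With alpha = a z, beta = Z$0 z + Z$1 and gamma = Z$2 z, radial_weight z * line_ratio alpha beta gamma t
  is the integrand of g00 at axis 0 a + t Z (g00_integrand_line); line_ratio_deriv is its t-derivative. *)
definition line_ratio :: "complex \<Rightarrow> complex \<Rightarrow> complex \<Rightarrow> real \<Rightarrow> real" where
  "line_ratio \<alpha> \<beta> \<gamma> t =
    (cmod (1 + t *\<^sub>R \<gamma>))^2 / ((cmod (\<alpha> + t *\<^sub>R \<beta>))^2 + (cmod (1 + t *\<^sub>R \<gamma>))^2)^2"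

definition line_ratio_deriv :: "complex \<Rightarrow> complex \<Rightarrow> complex \<Rightarrow> real \<Rightarrow> real" where
  "line_ratio_deriv \<alpha> \<beta> \<gamma> t =
    (let N = (cmod (1 + t *\<^sub>R \<gamma>))^2; D = (cmod (\<alpha> + t *\<^sub>R \<beta>))^2 + N;
         N' = 2 * inner (1 + t *\<^sub>R \<gamma>) \<gamma>; D' = 2 * inner (\<alpha> + t *\<^sub>R \<beta>) \<beta> + N'
     in N'/D^2 - 2*N*D'/D^3)"

lemma DERIV_line_ratio:
  assumes "(cmod (\<alpha> + t *\<^sub>R \<beta>))^2 + (cmod (1 + t *\<^sub>R \<gamma>))^2 \<noteq> 0"
  shows "(line_ratio \<alpha> \<beta> \<gamma> has_real_derivative line_ratio_deriv \<alpha> \<beta> \<gamma> t) (at t)"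
proof -
  define N D N' D' where "N = (cmod (1 + t *\<^sub>R \<gamma>))^2"
    and "D = (cmod (\<alpha> + t *\<^sub>R \<beta>))^2 + (cmod (1 + t *\<^sub>R \<gamma>))^2"
    and "N' = 2 * inner (1 + t *\<^sub>R \<gamma>) \<gamma>" and "D' = 2 * inner (\<alpha> + t *\<^sub>R \<beta>) \<beta> + N'"
  have dN: "((\<lambda>t. (cmod (1 + t *\<^sub>R \<gamma>))^2) has_real_derivative N') (at t)"
    unfolding N'_def by (rule DERIV_cmod_power2_line)
  have dD: "((\<lambda>t. (cmod (\<alpha> + t *\<^sub>R \<beta>))^2 + (cmod (1 + t *\<^sub>R \<gamma>))^2) has_real_derivative D') (at t)"
    unfolding D'_def by (intro DERIV_add DERIV_cmod_power2_line dN)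
  have "((\<lambda>t. ((cmod (\<alpha> + t *\<^sub>R \<beta>))^2 + (cmod (1 + t *\<^sub>R \<gamma>))^2)^2) has_real_derivative 2 * D * D') (at t)"
    using DERIV_mult[OF dD dD] unfolding power2_eq_square[of "_ + _"] by (simp add: D_def algebra_simps)
  from DERIV_divide[OF dN this]
  have "(line_ratio \<alpha> \<beta> \<gamma> has_real_derivative (N' * D^2 - N * (2 * D * D')) / (D^2 * D^2)) (at t)"
    using assms unfolding line_ratio_def[abs_def] by (simp add: N_def D_def)
  moreover have "(N' * D^2 - N * (2 * D * D')) / (D^2 * D^2) = N'/D^2 - 2*N*D'/D^3"
  proof -
    have "D \<noteq> 0" using assms by (simp add: D_def)
    then show ?thesis by (simp add: field_simps power2_eq_square power3_eq_cube)
  qed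
  ultimately show ?thesis
    by (simp add: line_ratio_deriv_def Let_def N_def D_def N'_def D'_def)
qed

lemma line_ratio_deriv_bound:
  assumes R: "1 \<le> R" and c: "0 < c"
    and D: "c * R \<le> (cmod (\<alpha> + t *\<^sub>R \<beta>))^2 + (cmod (1 + t *\<^sub>R \<gamma>))^2"
    and K: "(cmod \<beta>)^2 + (cmod \<gamma>)^2 \<le> K * R"
  shows "\<bar>line_ratio_deriv \<alpha> \<beta> \<gamma> t\<bar> \<le> 3*(K/c + 1)/(c*R)"
proof -
  define N D N' D' where "N = (cmod (1 + t *\<^sub>R \<gamma>))^2"
    and "D = (cmod (\<alpha> + t *\<^sub>R \<beta>))^2 + (cmod (1 + t *\<^sub>R \<gamma>))^2"
    and "N' = 2 * inner (1 + t *\<^sub>R \<gamma>) \<gamma>" and "D' = 2 * inner (\<alpha> + t *\<^sub>R \<beta>) \<beta> + N'"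
  have cR: "0 < c * R" using c R by simp
  have D0: "0 < D" and ND: "0 \<le> N" "N \<le> D" using cR D by (simp_all add: D_def N_def)
  have K0: "0 \<le> K" using K R by (smt (verit) zero_le_power2 zero_le_mult_iff)
  have "K/c * (c * R) \<le> K/c * D" using D c K0 by (intro mult_left_mono) (simp_all add: D_def)
  then have KR: "K * R \<le> K/c * D" using c by simp
  have "\<bar>N'\<bar> \<le> N + (cmod \<gamma>)^2"
    using abs_two_inner_le[of "1 + t *\<^sub>R \<gamma>" \<gamma>] by (simp add: N'_def N_def)
  moreover have "\<bar>D'\<bar> \<le> D + (cmod \<beta>)^2 + (cmod \<gamma>)^2"
    using abs_two_inner_le[of "\<alpha> + t *\<^sub>R \<beta>" \<beta>] abs_two_inner_le[of "1 + t *\<^sub>R \<gamma>" \<gamma>]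
    by (simp add: D'_def N'_def D_def)
  moreover have "(K/c + 1) * D = K/c * D + D"
    by (simp add: algebra_simps)
  ultimately have N': "\<bar>N'\<bar> \<le> (K/c + 1) * D" and D': "\<bar>D'\<bar> \<le> (K/c + 1) * D"
    using K KR ND zero_le_power2[of "cmod \<beta>"] by linarith+
  have "line_ratio_deriv \<alpha> \<beta> \<gamma> t = N'/D^2 - 2*N*D'/D^3"
    by (simp add: line_ratio_deriv_def Let_def N_def D_def N'_def D'_def)
  then have "\<bar>line_ratio_deriv \<alpha> \<beta> \<gamma> t\<bar> \<le> \<bar>N'/D^2\<bar> + \<bar>2*N*D'/D^3\<bar>"
    by (simp only: abs_triangle_ineq4)
  also have "\<dots> = \<bar>N'\<bar>/D^2 + 2*N*\<bar>D'\<bar>/D^3"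
    using D0 ND by (simp add: abs_divide abs_mult)
  also have "\<dots> \<le> (K/c + 1) * D / D^2 + 2*D*((K/c + 1) * D)/D^3"
    using D0 ND N' D' by (intro add_mono divide_right_mono mult_mono) simp_all
  also have "\<dots> = 3*(K/c + 1)/D"
    using D0 by (simp add: field_simps power2_eq_square power3_eq_cube)
  also have "\<dots> \<le> 3*(K/c + 1)/(c*R)"
    using D0 cR D K0 c by (intro divide_left_mono) (simp_all add: D_def)
  finally show ?thesis .
qed

lemma line_denom_lower:
  assumes \<alpha>: "(cmod \<alpha>)^2 = s * r" and s: "0 < s" "s \<le> 1" and r: "0 \<le> r"
    and K: "(cmod \<beta>)^2 + (cmod \<gamma>)^2 \<le> K * (1 + r)" and t: "t^2 * K \<le> s/4"
  shows "s/4 * (1 + r) \<le> (cmod (\<alpha> + t *\<^sub>R \<beta>))^2 + (cmod (1 + t *\<^sub>R \<gamma>))^2"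
proof -
  have "(cmod \<alpha>)^2/2 - t^2 * (cmod \<beta>)^2 \<le> (cmod (\<alpha> + t *\<^sub>R \<beta>))^2"
    and "1/2 - t^2 * (cmod \<gamma>)^2 \<le> (cmod (1 + t *\<^sub>R \<gamma>))^2"
    using norm_add_power2_ge[of \<alpha> "t *\<^sub>R \<beta>"] norm_add_power2_ge[of 1 "t *\<^sub>R \<gamma>"]
    by (simp_all add: power_mult_distrib)
  moreover have "t^2 * ((cmod \<beta>)^2 + (cmod \<gamma>)^2) \<le> s/4 * (1 + r)"
  proof -
    have "t^2 * ((cmod \<beta>)^2 + (cmod \<gamma>)^2) \<le> t^2 * K * (1 + r)"
      using K by (simp add: mult_left_mono mult.assoc)
    also have "\<dots> \<le> s/4 * (1 + r)"
      using t r by (intro mult_right_mono) simp_all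
    finally show ?thesis .
  qed
  moreover have "s/2 * (1 + r) \<le> (s * r + 1)/2"
    using s by (simp add: algebra_simps)
  ultimately show ?thesis
    using \<alpha> by (simp add: algebra_simps)
qed

lemma line_ratio_deriv_0:
  "line_ratio_deriv \<alpha> \<beta> \<gamma> 0
     = 2 * Re \<gamma> / (1 + (cmod \<alpha>)^2)^2 - 2 * (2 * inner \<alpha> \<beta> + 2 * Re \<gamma>) / (1 + (cmod \<alpha>)^2)^3"
  by (simp add: line_ratio_deriv_def Let_def add.commute)

lemma line_ratio_deriv_0_add:
  "line_ratio_deriv \<alpha> (\<beta> + \<beta>') (\<gamma> + \<gamma>') 0 = line_ratio_deriv \<alpha> \<beta> \<gamma> 0 + line_ratio_deriv \<alpha> \<beta>' \<gamma>' 0"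
  unfolding line_ratio_deriv_0 by (simp add: inner_add_right add_divide_distrib diff_divide_distrib algebra_simps)

lemma line_ratio_deriv_0_minus:
  "line_ratio_deriv (- \<alpha>) \<beta> (- \<gamma>) 0 = - line_ratio_deriv \<alpha> \<beta> \<gamma> 0"
  unfolding line_ratio_deriv_0 by (simp add: add_divide_distrib diff_divide_distrib algebra_simps)

definition radial_weight :: "complex \<Rightarrow> real" where
  "radial_weight z = 2 * (cmod z)^2 / (1 + (cmod z)^2)^2"

lemma radial_weight_bound: "0 \<le> radial_weight z" "radial_weight z \<le> 2 / (1 + (cmod z)^2)"
proof -
  define R where "R = 1 + (cmod z)^2"
  have R: "0 < R" by (simp add: R_def add_pos_nonneg)
  show "0 \<le> radial_weight z" by (simp add: radial_weight_def)
  have "radial_weight z \<le> 2 * R / R^2"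
    unfolding radial_weight_def R_def[symmetric] using R by (intro divide_right_mono) (simp_all add: R_def)
  also have "\<dots> = 2 / R"
    using R by (simp add: power2_eq_square)
  finally show "radial_weight z \<le> 2 / (1 + (cmod z)^2)" by (simp add: R_def)
qed

lemma g00_integrand_line:
  fixes Z :: "complex^3"
  shows "weight (axis 0 a + t *\<^sub>R Z) z * (cmod (z * ((axis 0 a + t *\<^sub>R Z)$2 * z + 1)))^2
     = radial_weight z * line_ratio (a*z) (Z$0*z + Z$1) (Z$2*z) t"
proof -
  have "(axis 0 a + t *\<^sub>R Z)$0 * z + (axis 0 a + t *\<^sub>R Z)$1 = a*z + t *\<^sub>R (Z$0*z + Z$1)"
    "(axis 0 a + t *\<^sub>R Z)$2 * z + 1 = 1 + t *\<^sub>R (Z$2*z)"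
    unfolding vector_add_component vector_scaleR_component
    by (simp_all add: scaleR_conv_of_real algebra_simps)
  then show ?thesis
    by (simp add: weight_def denom_norm_def line_ratio_def radial_weight_def norm_mult
        power_mult_distrib add.commute)
qed

lemma cmod_direction_power2_le:
  fixes Z :: "complex^3"
  shows "(cmod (Z$0*z + Z$1))^2 + (cmod (Z$2*z))^2
    \<le> ((cmod (Z$0) + cmod (Z$1))^2 + (cmod (Z$2))^2) * (1 + (cmod z)^2)"
proof -
  have "(cmod (Z$0*z + Z$1))^2 \<le> ((cmod (Z$0) + cmod (Z$1)) * sqrt (1 + (cmod z)^2))^2"
    by (intro power_mono cmod_mult_add_le) simp
  also have "\<dots> = (cmod (Z$0) + cmod (Z$1))^2 * (1 + (cmod z)^2)"
    by (simp add: power_mult_distrib)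
  finally have "(cmod (Z$0*z + Z$1))^2 \<le> (cmod (Z$0) + cmod (Z$1))^2 * (1 + (cmod z)^2)" .
  moreover have "(cmod (Z$2*z))^2 \<le> (cmod (Z$2))^2 * (1 + (cmod z)^2)"
    by (simp add: norm_mult power_mult_distrib mult_left_mono)
  ultimately show ?thesis
    unfolding distrib_right by linarith
qed

lemma g00_integrand_deriv_dominated:
  fixes Z :: "complex^3"
  assumes a: "0 < cmod a" "cmod a < 1"
  obtains d C where "0 < d"
    and "\<And>t z. \<bar>t\<bar> < d \<Longrightarrow> 0 < (cmod (a*z + t *\<^sub>R (Z$0*z + Z$1)))^2 + (cmod (1 + t *\<^sub>R (Z$2*z)))^2"
    and "\<And>t z. \<bar>t\<bar> < d \<Longrightarrow>
      \<bar>radial_weight z * line_ratio_deriv (a*z) (Z$0*z + Z$1) (Z$2*z) t\<bar> \<le> C * (1/(1 + (cmod z)^2)^2)"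
proof
  define K where "K = (cmod (Z$0) + cmod (Z$1))^2 + (cmod (Z$2))^2"
  define c where "c = (cmod a)^2/4"
  have K: "0 \<le> K" and c: "0 < c"
    using a by (simp_all add: K_def c_def)
  show "0 < min 1 ((cmod a)^2/(4*K + 1))"
    using a K by (simp add: add_nonneg_pos)
  have lower: "c * (1 + (cmod z)^2)
      \<le> (cmod (a*z + t *\<^sub>R (Z$0*z + Z$1)))^2 + (cmod (1 + t *\<^sub>R (Z$2*z)))^2"
    if "\<bar>t\<bar> < min 1 ((cmod a)^2/(4*K + 1))" for t z
    unfolding c_def using a power_le_one[of "cmod a" 2] cmod_direction_power2_le[of Z z]
      power2_mult_le_of_abs_less_min[OF K _ that]
    by (intro line_denom_lower) (simp_all add: K_def norm_mult power_mult_distrib power_less_one_iff)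
  show "0 < (cmod (a*z + t *\<^sub>R (Z$0*z + Z$1)))^2 + (cmod (1 + t *\<^sub>R (Z$2*z)))^2"
    if "\<bar>t\<bar> < min 1 ((cmod a)^2/(4*K + 1))" for t z
    using lower[OF that, of z] c by (smt (verit) mult_pos_pos zero_le_power2)
  show "\<bar>radial_weight z * line_ratio_deriv (a*z) (Z$0*z + Z$1) (Z$2*z) t\<bar>
      \<le> 6*(K/c + 1)/c * (1/(1 + (cmod z)^2)^2)"
    if "\<bar>t\<bar> < min 1 ((cmod a)^2/(4*K + 1))" for t z
  proof -
    define R where "R = 1 + (cmod z)^2"
    have R: "1 \<le> R" by (simp add: R_def)
    have "\<bar>line_ratio_deriv (a*z) (Z$0*z + Z$1) (Z$2*z) t\<bar> \<le> 3*(K/c + 1)/(c*R)"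
      using lower[OF that, of z] cmod_direction_power2_le[of Z z]
      by (intro line_ratio_deriv_bound[OF R c]) (simp_all add: R_def K_def)
    then have "\<bar>radial_weight z * line_ratio_deriv (a*z) (Z$0*z + Z$1) (Z$2*z) t\<bar>
        \<le> 2/R * (3*(K/c + 1)/(c*R))"
      unfolding abs_mult using radial_weight_bound[of z]
      by (intro mult_mono) (simp_all add: R_def)
    also have "\<dots> = 6*(K/c + 1)/c * (1/R^2)"
      by (simp add: power2_eq_square)
    finally show ?thesis by (simp add: R_def)
  qed
qed

lemma DERIV_g00_integral:
  fixes Z :: "complex^3"
  assumes a: "0 < cmod a" "cmod a < 1"
  defines "L \<equiv> \<lambda>z. radial_weight z * line_ratio_deriv (a*z) (Z$0*z + Z$1) (Z$2*z) 0"
  shows "integrable lborel L"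
    and "((\<lambda>t. g00 (axis 0 a + t *\<^sub>R Z)) has_real_derivative (LINT z|lborel. L z)) (at 0)"
proof -
  define f f' where "f t z = radial_weight z * line_ratio (a*z) (Z$0*z + Z$1) (Z$2*z) t"
    and "f' t z = radial_weight z * line_ratio_deriv (a*z) (Z$0*z + Z$1) (Z$2*z) t" for t z
  obtain d C where d: "0 < d"
    and pos: "\<And>t z. \<bar>t\<bar> < d \<Longrightarrow> 0 < (cmod (a*z + t *\<^sub>R (Z$0*z + Z$1)))^2 + (cmod (1 + t *\<^sub>R (Z$2*z)))^2"
    and bnd: "\<And>t z. \<bar>t\<bar> < d \<Longrightarrow> \<bar>f' t z\<bar> \<le> C * (1/(1 + (cmod z)^2)^2)"
    using g00_integrand_deriv_dominated[OF a, of Z] unfolding f'_def by metis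
  have der: "((\<lambda>t. f t z) has_real_derivative f' t z) (at t)" if "\<bar>t\<bar> < d" for t z
    unfolding f_def f'_def using pos[OF that, of z]
    by (intro DERIV_cmult DERIV_line_ratio) (metis less_irrefl)
  have "f 0 = metric_density (axis 0 a) (axis 0 1) (axis 0 1)"
    using g00_integrand_line[of a 0 Z]
    by (simp add: fun_eq_iff f_def metric_density_def var_numer_axis_0 power2_norm_eq_inner)
  then have int0: "integrable lborel (f 0)"
    using a by (simp add: integrable_metric_density)
  have meas: "f t \<in> borel_measurable lborel" "f' 0 \<in> borel_measurable lborel" for t
    unfolding f_def f'_def radial_weight_def line_ratio_def line_ratio_deriv_def Let_def
    by measurable
  note dominated = DERIV_integral_dominated[where M=lborel and f=f and f'=f', OF d meas int0 der bnd
      integrable_mult_right[OF integrable_inverse_one_plus_cmod_power2_squared]]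
  moreover have "g00 (axis 0 a + t *\<^sub>R Z) = (LINT z|lborel. f t z)" for t
    unfolding g00_def f_def g00_integrand_line ..
  ultimately show "integrable lborel L"
    and "((\<lambda>t. g00 (axis 0 a + t *\<^sub>R Z)) has_real_derivative (LINT z|lborel. L z)) (at 0)"
    by (simp_all add: L_def f'_def[abs_def])
qed

lemma DERIV_g00:
  fixes Z :: "complex^3"
  assumes a: "0 < cmod a" "cmod a < 1"
  shows "((\<lambda>t. g00 (axis 0 a + t *\<^sub>R Z)) has_real_derivative
      2*pi*line_coeff' ((cmod a)^2) * (2 * inner a (Z$0))) (at 0)"
proof -
  define L where "L W z = radial_weight z * line_ratio_deriv (a*z) (W$0*z + W$1) (W$2*z) 0"
    for W :: "complex^3" and z
  define Zt Zn where "Zt = (axis 0 (Z$0) :: complex^3)" and "Zn = Z - axis 0 (Z$0)"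
  have "((\<lambda>t. 2*pi*line_coeff ((cmod (a + t *\<^sub>R Z$0))^2)) has_real_derivative
      2*pi*line_coeff' ((cmod a)^2) * (2 * inner a (Z$0))) (at 0)"
    by (rule DERIV_metric_coeff_line[OF a])
  moreover have "eventually (\<lambda>t. g00 (axis 0 a + t *\<^sub>R Zt) = 2*pi*line_coeff ((cmod (a + t *\<^sub>R Z$0))^2)) (nhds 0)"
    using eventually_norm_line_between[OF a, of "Z$0"]
  proof eventually_elim
    case (elim t)
    then show ?case
      by (simp add: Zt_def axis_0_add_scaleR g00_axis_0)
  qed
  ultimately have "((\<lambda>t. g00 (axis 0 a + t *\<^sub>R Zt)) has_real_derivative
      2*pi*line_coeff' ((cmod a)^2) * (2 * inner a (Z$0))) (at 0)"
    by (simp add: DERIV_cong_ev)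
  then have tangential: "(LINT z|lborel. L Zt z) = 2*pi*line_coeff' ((cmod a)^2) * (2 * inner a (Z$0))"
    using DERIV_g00_integral(2)[OF a, of Zt] by (simp add: L_def DERIV_unique)
  \<comment> \<open>The transversal part Zn of Z only contributes an odd integrand.\<close>
  have normal: "(LINT z|lborel. L Zn z) = 0"
  proof (rule integral_odd_eq_0)
    show "L Zn \<in> borel_measurable borel"
      unfolding L_def radial_weight_def line_ratio_deriv_def Let_def by measurable
    show "L Zn (-z) = - L Zn z" for z
      using line_ratio_deriv_0_minus[of "a*z" "Zn$1" "Zn$2*z"]
      by (simp add: L_def Zn_def radial_weight_def)
  qed
  have "L Z z = L Zt z + L Zn z" for z
    using line_ratio_deriv_0_add[of "a*z" "Z$0*z" "Z$1" 0 "Z$2*z"]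
    by (simp add: L_def Zt_def Zn_def distrib_left)
  then have "(LINT z|lborel. L Z z) = 2*pi*line_coeff' ((cmod a)^2) * (2 * inner a (Z$0))"
    using DERIV_g00_integral(1)[OF a] tangential normal by (simp add: L_def)
  then show ?thesis
    using DERIV_g00_integral(2)[OF a, of Z] by (simp add: L_def)
qed

section \<open>Curvature along the line\<close>

lemma dd_eqI:
  assumes "eventually (\<lambda>t. \<psi> (x + t *\<^sub>R X) = h t) (nhds 0)" "(h has_real_derivative D) (at 0)"
  shows "dd \<psi> x X = D"
  unfolding dd_def using assms by (intro DERIV_imp_deriv) (simp add: DERIV_cong_ev)

lemma eventually_det3_line_neq_0:
  assumes "det3 x \<noteq> 0"
  shows "eventually (\<lambda>t. det3 (x + t *\<^sub>R Z) \<noteq> 0) (nhds 0)"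
proof -
  have "((\<lambda>t. det3 (x + t *\<^sub>R Z)) \<longlongrightarrow> det3 x) (nhds 0)"
    unfolding det3_def by (auto intro!: tendsto_eq_intros filterlim_ident)
  then show ?thesis using assms by (rule tendsto_imp_eventually_ne)
qed

lemma dd_gam_3_along_axis_0:
  assumes a: "0 < cmod a" "cmod a < 1"
  shows "dd (\<lambda>y. gam 3 y (axis 0 \<eta>) Z) (axis 0 a) (axis 0 \<xi>)
    = inner \<eta> (Z$0) * (2*pi*line_coeff' ((cmod a)^2) * (2 * inner a \<xi>))"
proof (rule dd_eqI)
  show "eventually (\<lambda>t. gam 3 (axis 0 a + t *\<^sub>R axis 0 \<xi>) (axis 0 \<eta>) Z
      = inner \<eta> (Z$0) * (2*pi*line_coeff ((cmod (a + t *\<^sub>R \<xi>))^2))) (nhds 0)"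
    using eventually_norm_line_between[OF a, of \<xi>]
    by eventually_elim (simp add: axis_0_add_scaleR gam_3_axis_0 mult.commute)
  show "((\<lambda>t. inner \<eta> (Z$0) * (2*pi*line_coeff ((cmod (a + t *\<^sub>R \<xi>))^2))) has_real_derivative
      inner \<eta> (Z$0) * (2*pi*line_coeff' ((cmod a)^2) * (2 * inner a \<xi>))) (at 0)"
    by (intro DERIV_cmult DERIV_metric_coeff_line a)
qed

lemma dd_gam_3_axis_0_axis_0:
  assumes a: "0 < cmod a" "cmod a < 1"
  shows "dd (\<lambda>y. gam 3 y (axis 0 \<xi>) (axis 0 \<eta>)) (axis 0 a) Z
    = inner \<xi> \<eta> * (2*pi*line_coeff' ((cmod a)^2) * (2 * inner a (Z$0)))"
proof (rule dd_eqI)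
  show "eventually (\<lambda>t. gam 3 (axis 0 a + t *\<^sub>R Z) (axis 0 \<xi>) (axis 0 \<eta>)
      = inner \<xi> \<eta> * g00 (axis 0 a + t *\<^sub>R Z)) (nhds 0)"
    by (rule eventually_mono[OF eventually_det3_line_neq_0[of "axis 0 a" Z]])
       (use a in \<open>simp_all add: gam_3_axis_0_axis_0\<close>)
  show "((\<lambda>t. inner \<xi> \<eta> * g00 (axis 0 a + t *\<^sub>R Z)) has_real_derivative
      inner \<xi> \<eta> * (2*pi*line_coeff' ((cmod a)^2) * (2 * inner a (Z$0)))) (at 0)"
    by (intro DERIV_cmult DERIV_g00 a)
qed

definition line_christoffel :: "complex \<Rightarrow> complex" where
  "line_christoffel a = of_real (line_phi ((cmod a)^2)) * cnj a"

lemma Chr_axis_0: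
  assumes a: "0 < cmod a" "cmod a < 1"
  shows "Chr 3 (axis 0 a) (axis 0 \<xi>) (axis 0 \<eta>) = axis 0 (line_christoffel a * \<xi> * \<eta>)"
proof -
  define koszul_rhs where "koszul_rhs Z =
      (dd (\<lambda>y. gam 3 y (axis 0 \<eta>) Z) (axis 0 a) (axis 0 \<xi>)
       + dd (\<lambda>y. gam 3 y (axis 0 \<xi>) Z) (axis 0 a) (axis 0 \<eta>)
       - dd (\<lambda>y. gam 3 y (axis 0 \<xi>) (axis 0 \<eta>)) (axis 0 a) Z) / 2" for Z
  \<comment> \<open>All three derivatives are multiples of line_coeff'; inner_cnj_mult_mult recombines them.\<close>
  have koszul: "gam 3 (axis 0 a) (axis 0 (line_christoffel a * \<xi> * \<eta>)) Z = koszul_rhs Z" for Z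
  proof -
    have "2*pi*line_coeff ((cmod a)^2) * line_phi ((cmod a)^2) = 2*pi*line_coeff' ((cmod a)^2)"
      using line_coeff_pos[of "(cmod a)^2"] a by (simp add: line_phi_def power_less_one_iff)
    then have "gam 3 (axis 0 a) (axis 0 (line_christoffel a * \<xi> * \<eta>)) Z
        = 2*pi*line_coeff' ((cmod a)^2) * inner (cnj a * \<xi> * \<eta>) (Z$0)"
      using gam_3_axis_0[OF a] by (simp add: line_christoffel_def mult.assoc inner_mult_left)
    then show ?thesis
      unfolding koszul_rhs_def dd_gam_3_along_axis_0[OF a] dd_gam_3_axis_0_axis_0[OF a]
        inner_cnj_mult_mult
      by (simp add: inner_commute algebra_simps)
  qed
  show ?thesis
    unfolding Chr_def koszul_rhs_def[symmetric]
  proof (rule the_equality)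
    fix w assume "\<forall>Z. gam 3 (axis 0 a) w Z = koszul_rhs Z"
    then show "w = axis 0 (line_christoffel a * \<xi> * \<eta>)"
      using koszul a by (intro gam_3_unique[of "axis 0 a"]) simp_all
  qed (use koszul in simp)
qed

definition line_christoffel_deriv :: "complex \<Rightarrow> complex \<Rightarrow> complex" where
  "line_christoffel_deriv a v = of_real (line_phi ((cmod a)^2)) * cnj v
     + of_real (line_phi' ((cmod a)^2) * (2 * inner a v)) * cnj a"

lemma has_vector_derivative_line_christoffel:
  assumes a: "0 < cmod a" "cmod a < 1"
  shows "((\<lambda>t. line_christoffel (a + t *\<^sub>R v)) has_vector_derivative line_christoffel_deriv a v) (at 0)"
proof -
  have "((\<lambda>t. line_phi ((cmod (a + t *\<^sub>R v))^2)) has_real_derivative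
      line_phi' ((cmod a)^2) * (2 * inner a v)) (at 0)"
    using a by (intro DERIV_comp_cmod_power2_line DERIV_line_phi) (simp_all add: power_less_one_iff)
  then have "((\<lambda>t. of_real (line_phi ((cmod (a + t *\<^sub>R v))^2)) :: complex) has_vector_derivative
      of_real (line_phi' ((cmod a)^2) * (2 * inner a v))) (at 0)"
    by (rule has_vector_derivative_of_real)
  moreover have "((\<lambda>t. cnj (a + t *\<^sub>R v)) has_vector_derivative cnj v) (at 0)"
    by (rule bounded_linear.has_vector_derivative[OF bounded_linear_cnj])
       (auto intro!: derivative_eq_intros)
  ultimately have "((\<lambda>t. of_real (line_phi ((cmod (a + t *\<^sub>R v))^2)) * cnj (a + t *\<^sub>R v))
      has_vector_derivative of_real (line_phi ((cmod (a + 0 *\<^sub>R v))^2)) * cnj v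
        + of_real (line_phi' ((cmod a)^2) * (2 * inner a v)) * cnj (a + 0 *\<^sub>R v)) (at 0)"
    by (rule has_vector_derivative_mult)
  then show ?thesis
    unfolding line_christoffel_def line_christoffel_deriv_def by simp
qed

lemma ddv_Chr_axis_0:
  assumes a: "0 < cmod a" "cmod a < 1"
  shows "ddv (\<lambda>y. Chr 3 y (axis 0 \<eta>) (axis 0 \<zeta>)) (axis 0 a) (axis 0 v)
    = axis 0 (line_christoffel_deriv a v * \<eta> * \<zeta>)"
proof -
  have dv: "((\<lambda>t. axis 0 (line_christoffel (a + t *\<^sub>R v) * \<eta> * \<zeta>) :: complex^3) has_vector_derivative
      axis 0 (line_christoffel_deriv a v * \<eta> * \<zeta>)) (at 0)"
    using has_vector_derivative_line_christoffel[OF a, of v]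
    by (intro bounded_linear.has_vector_derivative[OF bounded_linear_axis_0]
        has_vector_derivative_mult_left)
  obtain S where S: "open S" "0 \<in> S"
    "\<And>t. t \<in> S \<Longrightarrow> 0 < cmod (a + t *\<^sub>R v) \<and> cmod (a + t *\<^sub>R v) < 1"
    using eventually_norm_line_between[OF a, of v] unfolding eventually_nhds by blast
  have "((\<lambda>t. Chr 3 (axis 0 a + t *\<^sub>R axis 0 v) (axis 0 \<eta>) (axis 0 \<zeta>)) has_vector_derivative
      axis 0 (line_christoffel_deriv a v * \<eta> * \<zeta>)) (at 0)"
  proof (rule has_vector_derivative_transform_within_open[OF dv S(1,2)])
    show "axis 0 (line_christoffel (a + t *\<^sub>R v) * \<eta> * \<zeta>)
        = Chr 3 (axis 0 a + t *\<^sub>R axis 0 v) (axis 0 \<eta>) (axis 0 \<zeta>)" if "t \<in> S" for t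
      using S(3)[OF that] by (simp add: axis_0_add_scaleR Chr_axis_0)
  qed
  then show ?thesis
    unfolding ddv_def by (rule vector_derivative_at)
qed

(* The two quadratic Christoffel terms are equal, so only the derivative terms remain. *)
lemma Riem_axis_0:
  assumes a: "0 < cmod a" "cmod a < 1"
  shows "Riem 3 (axis 0 a) (axis 0 \<xi>) (axis 0 \<eta>) (axis 0 \<zeta>)
    = axis 0 ((line_christoffel_deriv a \<xi> * \<eta> - line_christoffel_deriv a \<eta> * \<xi>) * \<zeta>)"
  unfolding Riem_def ddv_Chr_axis_0[OF a] Chr_axis_0[OF a]
  by (simp add: axis_0_diff[symmetric] axis_0_add[symmetric] algebra_simps)

lemma inner_line_christoffel_deriv_commutator:
  "inner ((line_christoffel_deriv a \<xi> * (\<i>*\<xi>) - line_christoffel_deriv a (\<i>*\<xi>) * \<xi>) * (\<i>*\<xi>)) \<xi>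
     = -2 * (cmod \<xi>)^4 * (line_phi ((cmod a)^2) + (cmod a)^2 * line_phi' ((cmod a)^2))"
proof -
  have "inner (((of_real p * cnj \<xi> + of_real (q * (2 * inner a \<xi>)) * cnj a) * (\<i>*\<xi>)
      - (of_real p * cnj (\<i>*\<xi>) + of_real (q * (2 * inner a (\<i>*\<xi>))) * cnj a) * \<xi>) * (\<i>*\<xi>)) \<xi>
    = -2 * (cmod \<xi>)^4 * (p + (cmod a)^2 * q)" for p q
  proof -
    have "(cmod \<xi>)^4 = ((cmod \<xi>)^2)^2"
      by (simp flip: power_mult)
    also have "\<dots> = ((Re \<xi>)^2 + (Im \<xi>)^2)^2"
      by (simp only: cmod_power2)
    finally have "(cmod \<xi>)^4 = ((Re \<xi>)^2 + (Im \<xi>)^2)^2" .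
    then show ?thesis
      unfolding inner_complex_def cmod_power2 by (simp add: power2_eq_square algebra_simps)
  qed
  then show ?thesis
    unfolding line_christoffel_deriv_def .
qed

lemma Jc_axis_0: "Jc (axis 0 c) = (axis 0 (\<i> * c) :: complex^3)"
  by (simp add: Jc_def vec_eq_iff axis_def)

lemma Hol_axis_0:
  assumes a: "0 < cmod a" "cmod a < 1"
  shows "Hol 3 (axis 0 a) (axis 0 \<xi>) = 2*pi*line_coeff ((cmod a)^2)
    * (-2 * (cmod \<xi>)^4 * (line_phi ((cmod a)^2) + (cmod a)^2 * line_phi' ((cmod a)^2)))"
  unfolding Hol_def Jc_axis_0 Riem_axis_0[OF a] gam_3_axis_0[OF a]
  by (simp add: inner_line_christoffel_deriv_commutator)

lemma Hol_axis_0_unit: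
  assumes a: "0 < cmod a" "cmod a < 1" and unit: "gam 3 (axis 0 a) (axis 0 \<xi>) (axis 0 \<xi>) = 1"
  shows "Hol 3 (axis 0 a) (axis 0 \<xi>) = line_curvature ((cmod a)^2)"
proof -
  define F where "F = 2*pi*line_coeff ((cmod a)^2)"
  have "F * (cmod \<xi>)^2 = 1"
    using unit by (simp add: gam_3_axis_0[OF a] F_def power2_norm_eq_inner)
  then have F: "F \<noteq> 0" and "(cmod \<xi>)^2 = 1/F"
    by (auto simp: eq_divide_eq mult.commute)
  moreover have "(cmod \<xi>)^4 = ((cmod \<xi>)^2)^2"
    by (simp flip: power_mult)
  ultimately have "F * (cmod \<xi>)^4 = 1/F"
    by (simp add: power2_eq_square)
  define X where "X = line_phi ((cmod a)^2) + (cmod a)^2 * line_phi' ((cmod a)^2)"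
  have "Hol 3 (axis 0 a) (axis 0 \<xi>) = -2 * X * (F * (cmod \<xi>)^4)"
    unfolding Hol_axis_0[OF a] F_def[symmetric] X_def[symmetric] by (simp add: algebra_simps)
  also have "\<dots> = -2 * X / F"
    using \<open>F * (cmod \<xi>)^4 = 1/F\<close> by simp
  finally show ?thesis
    unfolding line_curvature_def F_def X_def .
qed

lemma exists_unit_axis_0:
  assumes a: "0 < cmod a" "cmod a < 1"
  shows "\<exists>\<xi>. gam 3 (axis 0 a) (axis 0 \<xi>) (axis 0 \<xi>) = 1"
proof
  define F where "F = 2*pi*line_coeff ((cmod a)^2)"
  have "0 < F"
    using a line_coeff_pos[of "(cmod a)^2"] by (simp add: F_def power_less_one_iff)
  then show "gam 3 (axis 0 a) (axis 0 (of_real (1 / sqrt F))) (axis 0 (of_real (1 / sqrt F))) = 1"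
    by (simp add: gam_3_axis_0[OF a] F_def[symmetric] power2_norm_eq_inner[symmetric]
        norm_divide power_divide)
qed

theorem theorem4p1:
  shows "\<not> bdd_above {Hol k x X | k x X. k < 4 \<and> x \<in> chart_dom k \<and> gam k x X X = 1}"
proof
  assume "bdd_above {Hol k x X | k x X. k < 4 \<and> x \<in> chart_dom k \<and> gam k x X X = 1}"
  then obtain B where B: "\<And>k x X. k < 4 \<Longrightarrow> x \<in> chart_dom k \<Longrightarrow> gam k x X X = 1 \<Longrightarrow> Hol k x X \<le> B"
    unfolding bdd_above_def by blast
  obtain b where "0 < b" and b: "\<And>s. 0 < s \<Longrightarrow> s < b \<Longrightarrow> B < line_curvature s"
    using filterlim_line_curvature unfolding filterlim_at_top_dense eventually_at_right_field by blast
  define s where "s = min (b/2) (1/2)"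
  define a where "a = complex_of_real (sqrt s)"
  have s: "0 < s" "s < 1" "s < b" and a: "0 < cmod a" "cmod a < 1" "(cmod a)^2 = s"
    using \<open>0 < b\<close> by (auto simp: s_def a_def)
  obtain \<xi> where unit: "gam 3 (axis 0 a) (axis 0 \<xi>) (axis 0 \<xi>) = 1"
    using exists_unit_axis_0[OF a(1,2)] by blast
  have "line_curvature s \<le> B"
    using B[of 3 "axis 0 a" "axis 0 \<xi>"] Hol_axis_0_unit[OF a(1,2) unit] a unit
    by (simp add: chart_dom_3_iff)
  with b[OF s(1,3)] show False by simp
qed

end
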